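(* If $\dim({\cal H})<\infty$, then $\mathrm{Sig}(T)=0$ for every $J$-unitary $T$ on ${\cal K}$ (all of which are then essentially ${\mathbb S}^1$-gapped and ${\mathbb S}^1$-Fredholm).
   Context: ${\cal H}$ is a complex Hilbert space, ${\cal K}={\cal H}\oplus{\cal H}$, $J=\begin{pmatrix}{\bf 1}&0\\0&-{\bf 1}\end{pmatrix}$. A bounded invertible $T$ is $J$-unitary if $T^*JT=J$; it is essentially ${\mathbb S}^1$-gapped if it has only discrete spectrum (isolated eigenvalues of finite algebraic multiplicity) on the unit circle, and ${\mathbb S}^1$-Fredholm if $T-z{\bf 1}$ is Fredholm for all $|z|=1$. For essentially ${\mathbb S}^1$-gapped $T$, choose $h>0$ such that the closed annulus $\{e^{-h}\le|z|\le e^h\}$ contains only discrete spectrum of $T$ and none on its boundary; let ${\cal E}_=$ be the span of the generalized eigenspaces of the eigenvalues of $T$ in this annulus, $\Phi_=$ an isometry onto ${\cal E}_=$, and $\mathrm{Sig}(T)=\nu_+-\nu_-$ where $\nu_\pm$ are the numbers of positive/negative eigenvalues of $\Phi_=^*J\Phi_=$. *)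

theory Defs
  imports "Jordan_Normal_Form.Jordan_Normal_Form" "Jordan_Normal_Form.Spectral_Radius"
begin

text \<open>H = complex^n (finite dimension n), K = H (+) H = complex^(2n), operators on K are
  complex (2n)x(2n) matrices; the first n coordinates are the first summand.\<close>

definition J_mat :: "nat \<Rightarrow> complex mat" where
  "J_mat n = mat (2*n) (2*n) (\<lambda>(i,j). if i = j then (if i < n then 1 else -1) else 0)"

definition J_unitary :: "nat \<Rightarrow> complex mat \<Rightarrow> bool" where
  "J_unitary n T \<longleftrightarrow> T \<in> carrier_mat (2*n) (2*n) \<and> invertible_mat T \<and>
     mat_adjoint T * J_mat n * T = J_mat n"

definition op_spectrum :: "complex mat \<Rightarrow> complex set" where
  "op_spectrum T = {z. \<not> invertible_mat (T - z \<cdot>\<^sub>m 1\<^sub>m (dim_row T))}"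

definition gen_eigenspace :: "complex mat \<Rightarrow> complex \<Rightarrow> complex vec set" where
  "gen_eigenspace T z = {v \<in> carrier_vec (dim_row T).
      \<exists>k. ((T - z \<cdot>\<^sub>m 1\<^sub>m (dim_row T)) ^\<^sub>m k) *\<^sub>v v = 0\<^sub>v (dim_row T)}"

text \<open>Discrete spectrum: isolated point of the spectrum which is an eigenvalue of finite
  algebraic multiplicity (the generalized eigenspace is finite dimensional).\<close>
definition discrete_spectrum_point :: "complex mat \<Rightarrow> complex \<Rightarrow> bool" where
  "discrete_spectrum_point T z \<longleftrightarrow> z \<in> op_spectrum T \<and> eigenvalue T z \<and>
     (\<exists>e>0. \<forall>w \<in> op_spectrum T. cmod (w - z) < e \<longrightarrow> w = z) \<and>
     (\<exists>B. finite B \<and> B \<subseteq> gen_eigenspace T z \<and>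
        gen_eigenspace T z \<subseteq> module.span class_ring (module_vec TYPE(complex) (dim_row T)) B)"

definition ess_S1_gapped :: "complex mat \<Rightarrow> bool" where
  "ess_S1_gapped T \<longleftrightarrow> (\<forall>z \<in> op_spectrum T. cmod z = 1 \<longrightarrow> discrete_spectrum_point T z)"

definition admissible_width :: "complex mat \<Rightarrow> real \<Rightarrow> bool" where
  "admissible_width T h \<longleftrightarrow> h > 0 \<and>
     (\<forall>z \<in> op_spectrum T. exp (-h) \<le> cmod z \<and> cmod z \<le> exp h \<longrightarrow> discrete_spectrum_point T z) \<and>
     (\<forall>z \<in> op_spectrum T. cmod z \<noteq> exp (-h) \<and> cmod z \<noteq> exp h)"

definition E_eq :: "complex mat \<Rightarrow> real \<Rightarrow> complex vec set" where
  "E_eq T h = module.span class_ring (module_vec TYPE(complex) (dim_row T))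
     (\<Union> {gen_eigenspace T z | z. eigenvalue T z \<and> exp (-h) \<le> cmod z \<and> cmod z \<le> exp h})"

definition isometry_onto :: "complex mat \<Rightarrow> nat \<Rightarrow> nat \<Rightarrow> complex vec set \<Rightarrow> bool" where
  "isometry_onto Phi m k E \<longleftrightarrow> Phi \<in> carrier_mat m k \<and> mat_adjoint Phi * Phi = 1\<^sub>m k \<and>
     {Phi *\<^sub>v x | x. x \<in> carrier_vec k} = E"

definition nu_pos :: "complex mat \<Rightarrow> nat" where
  "nu_pos M = (\<Sum>a \<in> {a. poly (char_poly M) a = 0 \<and> a \<in> \<real> \<and> Re a > 0}. order a (char_poly M))"

definition nu_neg :: "complex mat \<Rightarrow> nat" where
  "nu_neg M = (\<Sum>a \<in> {a. poly (char_poly M) a = 0 \<and> a \<in> \<real> \<and> Re a < 0}. order a (char_poly M))"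

text \<open>Sig(T) computed with a given admissible h and isometry Phi.\<close>
definition Sig_with :: "nat \<Rightarrow> complex mat \<Rightarrow> int" where
  "Sig_with n Phi = int (nu_pos (mat_adjoint Phi * J_mat n * Phi)) - int (nu_neg (mat_adjoint Phi * J_mat n * Phi))"

end

theory Submission
  imports Defs
begin

(* Let [x, y] = <J x, y>.  Generalized eigenvectors of the J-unitary T for eigenvalues z, w
   with z * cnj w \<noteq> 1 are J-orthogonal (Krein).  Hence the generalized eigenvectors with
   eigenvalues outside the annulus span two J-neutral subspaces E_> and E_<, both J-orthogonal to
   E_=, and [.,.] is nondegenerate on E_=.  The compression Phi* J Phi is self-adjoint and
   invertible, so E_= is spanned by a J-positive subspace P and a J-negative subspace Q.  Adding
   E_> or E_< to P or to Q yields J-semidefinite subspaces, each of dimension at most n: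
   dim P + dim E_> \<le> n, dim P + dim E_< \<le> n, and likewise for Q.  Since
   dim P + dim Q = dim E_= = 2n - dim E_> - dim E_<, all four are equalities and dim P = dim Q. *)

section \<open>The complex inner product\<close>

lemma cscalar_prod_eq_sum:
  assumes "(y :: complex vec) \<in> carrier_vec N"
  shows "x \<bullet>c y = (\<Sum>i<N. x$i * cnj (y$i))"
  using assms by (auto simp: scalar_prod_def lessThan_atLeast0 intro!: sum.cong)

lemma mult_mat_vec_index_sum:
  assumes "A \<in> carrier_mat N M" "x \<in> carrier_vec M" "i < N"
  shows "(A *\<^sub>v x)$i = (\<Sum>j<M. A$$(i,j) * x$j)"
  using assms by (auto simp: scalar_prod_def lessThan_atLeast0 intro!: sum.cong)

lemma mult_mat_vec_zero: "A \<in> carrier_mat N M \<Longrightarrow> A *\<^sub>v 0\<^sub>v M = 0\<^sub>v N"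
  by (intro eq_vecI) auto

lemma mult_mat_vec_unit_vec:
  assumes A: "(A :: complex mat) \<in> carrier_mat N M" and i: "i < M"
  shows "A *\<^sub>v unit_vec M i = col A i"
proof (intro eq_vecI)
  fix l assume "l < dim_vec (col A i)"
  then have l: "l < N" using A by auto
  have "(A *\<^sub>v unit_vec M i)$l = (\<Sum>j<M. A$$(l,j) * unit_vec M i $ j)"
    using mult_mat_vec_index_sum[OF A _ l] by simp
  also have "\<dots> = (\<Sum>j<M. if j = i then A$$(l,i) else 0)"
    by (intro sum.cong) (auto simp: unit_vec_def)
  finally show "(A *\<^sub>v unit_vec M i)$l = col A i $ l" using l A i by simp
qed (use A in auto)

lemma cscalar_prod_conjugate:
  assumes "(x :: complex vec) \<in> carrier_vec N" "y \<in> carrier_vec N"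
  shows "cnj (x \<bullet>c y) = y \<bullet>c x"
  using assms by (simp add: cscalar_prod_eq_sum mult.commute)

lemma cscalar_prod_add_left:
  "(x :: complex vec) \<in> carrier_vec N \<Longrightarrow> y \<in> carrier_vec N \<Longrightarrow> z \<in> carrier_vec N \<Longrightarrow>
   (x + y) \<bullet>c z = x \<bullet>c z + y \<bullet>c z"
  by (auto simp: cscalar_prod_eq_sum sum.distrib algebra_simps intro: sum.cong)

lemma cscalar_prod_add_right:
  "(x :: complex vec) \<in> carrier_vec N \<Longrightarrow> y \<in> carrier_vec N \<Longrightarrow> z \<in> carrier_vec N \<Longrightarrow>
   z \<bullet>c (x + y) = z \<bullet>c x + z \<bullet>c y"
  using cscalar_prod_eq_sum[of "x + y" N z]
  by (auto simp: cscalar_prod_eq_sum sum.distrib algebra_simps intro: sum.cong)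

lemma cscalar_prod_diff_left:
  "(x :: complex vec) \<in> carrier_vec N \<Longrightarrow> y \<in> carrier_vec N \<Longrightarrow> z \<in> carrier_vec N \<Longrightarrow>
   (x - y) \<bullet>c z = x \<bullet>c z - y \<bullet>c z"
  by (auto simp: cscalar_prod_eq_sum sum_subtractf algebra_simps intro: sum.cong)

lemma cscalar_prod_diff_right:
  "(x :: complex vec) \<in> carrier_vec N \<Longrightarrow> y \<in> carrier_vec N \<Longrightarrow> z \<in> carrier_vec N \<Longrightarrow>
   z \<bullet>c (x - y) = z \<bullet>c x - z \<bullet>c y"
  using cscalar_prod_eq_sum[of "x - y" N z]
  by (auto simp: cscalar_prod_eq_sum sum_subtractf algebra_simps intro: sum.cong)

lemma cscalar_prod_smult_left:
  "(x :: complex vec) \<in> carrier_vec N \<Longrightarrow> z \<in> carrier_vec N \<Longrightarrow> (a \<cdot>\<^sub>v x) \<bullet>c z = a * (x \<bullet>c z)"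
  by (auto simp: cscalar_prod_eq_sum sum_distrib_left algebra_simps intro: sum.cong)

lemma cscalar_prod_smult_right:
  "(x :: complex vec) \<in> carrier_vec N \<Longrightarrow> z \<in> carrier_vec N \<Longrightarrow> z \<bullet>c (a \<cdot>\<^sub>v x) = cnj a * (z \<bullet>c x)"
  by (auto simp: cscalar_prod_eq_sum sum_distrib_left algebra_simps intro: sum.cong)

lemma mat_adjoint_carrier: "A \<in> carrier_mat N M \<Longrightarrow> mat_adjoint A \<in> carrier_mat M N"
  unfolding mat_adjoint_def by auto

lemma mat_adjoint_index:
  assumes "A \<in> carrier_mat N M" "i < M" "j < N"
  shows "mat_adjoint A $$ (i,j) = cnj (A$$(j,i))"
  using assms unfolding mat_adjoint_def by (auto simp: mat_of_rows_def)

lemma cscalar_prod_mat_adjoint: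
  assumes A: "(A :: complex mat) \<in> carrier_mat N M" and x: "x \<in> carrier_vec M" and y: "y \<in> carrier_vec N"
  shows "(A *\<^sub>v x) \<bullet>c y = x \<bullet>c (mat_adjoint A *\<^sub>v y)"
proof -
  have "(A *\<^sub>v x) \<bullet>c y = (\<Sum>i<N. \<Sum>j<M. A$$(i,j) * x$j * cnj (y$i))"
    using A x y by (simp add: cscalar_prod_eq_sum mult_mat_vec_index_sum sum_distrib_right
        del: index_mult_mat_vec)
  also have "\<dots> = (\<Sum>j<M. \<Sum>i<N. A$$(i,j) * x$j * cnj (y$i))" by (rule sum.swap)
  also have "\<dots> = x \<bullet>c (mat_adjoint A *\<^sub>v y)"
    using A y mat_adjoint_carrier[OF A]
    by (auto simp: cscalar_prod_eq_sum[of "mat_adjoint A *\<^sub>v y" M] mult_mat_vec_index_sum mat_adjoint_index sum_distrib_left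
        mult.commute mult.left_commute simp del: index_mult_mat_vec intro!: sum.cong)
  finally show ?thesis .
qed

lemma mult_mat_vec_cscalar_prod_left:
  assumes Y: "(Y :: complex mat) \<in> carrier_mat N m" and a: "a \<in> carrier_vec m" and x: "x \<in> carrier_vec N"
  shows "(Y *\<^sub>v a) \<bullet>c x = (\<Sum>j<m. a$j * (col Y j \<bullet>c x))"
proof -
  have "(Y *\<^sub>v a) \<bullet>c x = (\<Sum>i<N. \<Sum>j<m. Y$$(i,j) * a$j * cnj (x$i))"
    using Y a x by (simp add: cscalar_prod_eq_sum mult_mat_vec_index_sum sum_distrib_right
        del: index_mult_mat_vec)
  also have "\<dots> = (\<Sum>j<m. \<Sum>i<N. Y$$(i,j) * a$j * cnj (x$i))" by (rule sum.swap)
  also have "\<dots> = (\<Sum>j<m. a$j * (col Y j \<bullet>c x))"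
    using Y x by (auto simp: cscalar_prod_eq_sum sum_distrib_left mult.commute mult.left_commute
        intro!: sum.cong)
  finally show ?thesis .
qed

lemma mult_mat_vec_cscalar_prod_right:
  assumes Y: "(Y :: complex mat) \<in> carrier_mat N m" and b: "b \<in> carrier_vec m" and x: "x \<in> carrier_vec N"
  shows "x \<bullet>c (Y *\<^sub>v b) = (\<Sum>j<m. cnj (b$j) * (x \<bullet>c col Y j))"
proof -
  have "x \<bullet>c (Y *\<^sub>v b) = cnj ((Y *\<^sub>v b) \<bullet>c x)"
    using Y b x cscalar_prod_conjugate[of "Y *\<^sub>v b" N x] by simp
  also have "\<dots> = (\<Sum>j<m. cnj (b$j) * (x \<bullet>c col Y j))"
    using Y x cscalar_prod_conjugate[of "col Y _" N x]
    by (auto simp: mult_mat_vec_cscalar_prod_left[OF Y b x] intro!: sum.cong)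
  finally show ?thesis .
qed

lemma cscalar_prod_self_pos:
  assumes "(z :: complex vec) \<in> carrier_vec N" "z \<noteq> 0\<^sub>v N"
  shows "0 < Re (z \<bullet>c z)"
  using conjugate_square_greater_0_vec[OF assms(1)] assms(2) by (simp add: less_complex_def)

section \<open>Generalized eigenspaces\<close>

definition shifted :: "complex mat \<Rightarrow> complex \<Rightarrow> complex vec \<Rightarrow> complex vec" where
  "shifted A c v = A *\<^sub>v v - c \<cdot>\<^sub>v v"

context
  fixes A :: "complex mat" and N :: nat
  assumes A: "A \<in> carrier_mat N N"
begin

lemma shifted_carrier: "v \<in> carrier_vec N \<Longrightarrow> shifted A c v \<in> carrier_vec N"
  unfolding shifted_def using A by auto

lemma shifted_pow_carrier: "v \<in> carrier_vec N \<Longrightarrow> (shifted A c ^^ k) v \<in> carrier_vec N"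
  by (induct k) (auto simp: shifted_carrier)

lemma shifted_add:
  "v \<in> carrier_vec N \<Longrightarrow> w \<in> carrier_vec N \<Longrightarrow> shifted A c (v + w) = shifted A c v + shifted A c w"
  unfolding shifted_def using A by (intro eq_vecI) (auto simp: mult_add_distrib_mat_vec algebra_simps)

lemma shifted_diff:
  "v \<in> carrier_vec N \<Longrightarrow> w \<in> carrier_vec N \<Longrightarrow> shifted A c (v - w) = shifted A c v - shifted A c w"
  unfolding shifted_def using A by (intro eq_vecI) (auto simp: mult_minus_distrib_mat_vec algebra_simps)

lemma shifted_smult: "v \<in> carrier_vec N \<Longrightarrow> shifted A c (a \<cdot>\<^sub>v v) = a \<cdot>\<^sub>v shifted A c v"
  unfolding shifted_def using A by (intro eq_vecI) (auto simp: mult_mat_vec algebra_simps)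

lemma shifted_zero: "shifted A c (0\<^sub>v N) = 0\<^sub>v N"
  unfolding shifted_def using A by (intro eq_vecI) auto

lemma shifted_change_scalar: "v \<in> carrier_vec N \<Longrightarrow> shifted A c v = shifted A m v + (m - c) \<cdot>\<^sub>v v"
  unfolding shifted_def using A by (intro eq_vecI) (auto simp: algebra_simps)

lemma shifted_commute: "v \<in> carrier_vec N \<Longrightarrow> shifted A c (shifted A d v) = shifted A d (shifted A c v)"
  unfolding shifted_def using A
  by (intro eq_vecI) (auto simp: mult_minus_distrib_mat_vec mult_mat_vec algebra_simps)

lemma shifted_pow_add:
  "v \<in> carrier_vec N \<Longrightarrow> w \<in> carrier_vec N \<Longrightarrow>
   (shifted A c ^^ k) (v + w) = (shifted A c ^^ k) v + (shifted A c ^^ k) w"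
  by (induct k) (auto simp: shifted_add shifted_pow_carrier)

lemma shifted_pow_smult: "v \<in> carrier_vec N \<Longrightarrow> (shifted A c ^^ k) (a \<cdot>\<^sub>v v) = a \<cdot>\<^sub>v (shifted A c ^^ k) v"
  by (induct k) (auto simp: shifted_smult shifted_pow_carrier)

lemma shifted_pow_zero: "(shifted A c ^^ k) (0\<^sub>v N) = 0\<^sub>v N"
  by (induct k) (auto simp: shifted_zero)

lemma shifted_pow_commute:
  "v \<in> carrier_vec N \<Longrightarrow> (shifted A c ^^ k) (shifted A d v) = shifted A d ((shifted A c ^^ k) v)"
  by (induct k) (auto simp: shifted_commute shifted_pow_carrier)

lemma shifted_pow_vanish_mono:
  assumes "(shifted A c ^^ k) v = 0\<^sub>v N" "k \<le> l"
  shows "(shifted A c ^^ l) v = 0\<^sub>v N"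
proof -
  have "l = (l - k) + k" using assms by simp
  then show ?thesis using assms shifted_pow_zero by (metis funpow_add comp_apply)
qed

lemma mat_pow_shift_mult_vec:
  "v \<in> carrier_vec N \<Longrightarrow> ((A - c \<cdot>\<^sub>m 1\<^sub>m N) ^\<^sub>m k) *\<^sub>v v = (shifted A c ^^ k) v"
proof (induct k arbitrary: v)
  case 0 then show ?case by simp
next
  case (Suc k)
  have B: "A - c \<cdot>\<^sub>m 1\<^sub>m N \<in> carrier_mat N N" using A by auto
  have "((A - c \<cdot>\<^sub>m 1\<^sub>m N) ^\<^sub>m Suc k) *\<^sub>v v = ((A - c \<cdot>\<^sub>m 1\<^sub>m N) ^\<^sub>m k) *\<^sub>v ((A - c \<cdot>\<^sub>m 1\<^sub>m N) *\<^sub>v v)"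
    using B Suc by (simp del: assoc_mult_mat_vec add: assoc_mult_mat_vec[of _ N N _ N])
  also have "(A - c \<cdot>\<^sub>m 1\<^sub>m N) *\<^sub>v v = shifted A c v"
    unfolding shifted_def using A Suc by (intro eq_vecI) (auto simp: minus_mult_distrib_mat_vec)
  finally show ?case using Suc by (simp add: shifted_carrier funpow_Suc_right del: funpow.simps)
qed

lemma gen_eigenspace_iff:
  "v \<in> gen_eigenspace A c \<longleftrightarrow> v \<in> carrier_vec N \<and> (\<exists>k. (shifted A c ^^ k) v = 0\<^sub>v N)"
  using A unfolding gen_eigenspace_def by (auto simp: mat_pow_shift_mult_vec)

lemma gen_eigenspace_carrier: "v \<in> gen_eigenspace A c \<Longrightarrow> v \<in> carrier_vec N"
  by (simp add: gen_eigenspace_iff)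

lemma zero_in_gen_eigenspace: "0\<^sub>v N \<in> gen_eigenspace A c"
  by (auto simp: gen_eigenspace_iff intro: exI[of _ 0])

lemma gen_eigenspace_add:
  assumes "v \<in> gen_eigenspace A c" "w \<in> gen_eigenspace A c"
  shows "v + w \<in> gen_eigenspace A c"
proof -
  from assms obtain k l where v: "v \<in> carrier_vec N" "(shifted A c ^^ k) v = 0\<^sub>v N"
    and w: "w \<in> carrier_vec N" "(shifted A c ^^ l) w = 0\<^sub>v N" by (auto simp: gen_eigenspace_iff)
  have "(shifted A c ^^ max k l) v = 0\<^sub>v N" "(shifted A c ^^ max k l) w = 0\<^sub>v N"
    using shifted_pow_vanish_mono v w by auto
  then show ?thesis using v w by (auto simp: gen_eigenspace_iff shifted_pow_add intro!: exI[of _ "max k l"])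
qed

lemma gen_eigenspace_smult:
  assumes "v \<in> gen_eigenspace A c"
  shows "a \<cdot>\<^sub>v v \<in> gen_eigenspace A c"
proof -
  from assms obtain k where "v \<in> carrier_vec N" "(shifted A c ^^ k) v = 0\<^sub>v N"
    by (auto simp: gen_eigenspace_iff)
  then show ?thesis by (auto simp: gen_eigenspace_iff shifted_pow_smult intro!: exI[of _ k])
qed

lemma gen_eigenspace_shifted:
  assumes "v \<in> gen_eigenspace A c"
  shows "shifted A d v \<in> gen_eigenspace A c"
proof -
  from assms obtain k where "v \<in> carrier_vec N" "(shifted A c ^^ k) v = 0\<^sub>v N"
    by (auto simp: gen_eigenspace_iff)
  then show ?thesis
    by (auto simp: gen_eigenspace_iff shifted_pow_commute shifted_carrier shifted_zero intro!: exI[of _ k])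
qed

lemma gen_eigenspace_shifted_rev:
  assumes "v \<in> carrier_vec N" "shifted A c v \<in> gen_eigenspace A c"
  shows "v \<in> gen_eigenspace A c"
proof -
  from assms obtain k where "(shifted A c ^^ k) (shifted A c v) = 0\<^sub>v N" by (auto simp: gen_eigenspace_iff)
  then have "(shifted A c ^^ Suc k) v = 0\<^sub>v N" by (simp add: funpow_Suc_right del: funpow.simps)
  then show ?thesis using assms by (auto simp: gen_eigenspace_iff simp del: funpow.simps)
qed

lemma eigenvalue_if_gen_eigenspace:
  assumes v: "v \<in> gen_eigenspace A c" and v0: "v \<noteq> 0\<^sub>v N"
  shows "eigenvalue A c"
proof -
  from v obtain k where vc: "v \<in> carrier_vec N" and k: "(shifted A c ^^ k) v = 0\<^sub>v N"
    by (auto simp: gen_eigenspace_iff)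
  define m where "m = (LEAST k. (shifted A c ^^ k) v = 0\<^sub>v N)"
  have m: "(shifted A c ^^ m) v = 0\<^sub>v N" unfolding m_def using k by (rule LeastI)
  obtain l where l: "m = Suc l" using m v0 by (cases m) auto
  let ?w = "(shifted A c ^^ l) v"
  have "?w \<noteq> 0\<^sub>v N"
  proof
    assume "?w = 0\<^sub>v N"
    then have "m \<le> l" unfolding m_def by (rule Least_le)
    then show False using l by simp
  qed
  moreover have wc: "?w \<in> carrier_vec N" using shifted_pow_carrier[OF vc] .
  moreover have "A *\<^sub>v ?w = c \<cdot>\<^sub>v ?w"
    using m l wc A unfolding shifted_def by (intro eq_vecI) (auto simp: vec_eq_iff)
  ultimately show ?thesis unfolding eigenvalue_def eigenvector_def using A by auto
qed

text \<open>Partial sums of the Neumann series (A - c)^-1 = \<Sum> (-1)^j (A - m)^j / d^(j+1) with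
  d = m - c; the k-th one inverts A - c on vectors g with (A - m)^k g = 0.\<close>
primrec neumann_partial :: "complex mat \<Rightarrow> complex \<Rightarrow> complex \<Rightarrow> complex vec \<Rightarrow> nat \<Rightarrow> complex vec" where
  "neumann_partial A m d g 0 = 0\<^sub>v (dim_vec g)"
| "neumann_partial A m d g (Suc k) = (1/d) \<cdot>\<^sub>v (g - shifted A m (neumann_partial A m d g k))"

lemma neumann_partial_invariant:
  assumes g: "g \<in> carrier_vec N"
    and P0: "P (0\<^sub>v N)" and Padd: "\<And>x y. P x \<Longrightarrow> P y \<Longrightarrow> P (x + y)"
    and Psmult: "\<And>x a. P x \<Longrightarrow> P (a \<cdot>\<^sub>v x)" and Pshifted: "\<And>x. P x \<Longrightarrow> P (shifted A m x)"
    and Pcarrier: "\<And>x. P x \<Longrightarrow> x \<in> carrier_vec N" and Pg: "P g"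
  shows "P (neumann_partial A m d g k)"
proof (induct k)
  case 0 then show ?case using g P0 by simp
next
  case (Suc k)
  have "g - shifted A m (neumann_partial A m d g k) = g + (-1) \<cdot>\<^sub>v shifted A m (neumann_partial A m d g k)"
    using Suc Pcarrier Pshifted g by (intro eq_vecI) auto
  then show ?case using Suc by (simp add: Padd Psmult Pshifted Pg)
qed

lemma shifted_neumann_partial:
  assumes g: "g \<in> carrier_vec N" and d: "d = m - c" "d \<noteq> 0"
  shows "shifted A c (neumann_partial A m d g k) = g - ((-1/d)^k) \<cdot>\<^sub>v (shifted A m ^^ k) g"
proof (induct k)
  case 0 then show ?case using g A by (intro eq_vecI) (auto simp: shifted_def)
next
  case (Suc k)
  let ?s = "neumann_partial A m d g k"
  let ?e = "((-1/d)^k) \<cdot>\<^sub>v (shifted A m ^^ k) g"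
  have sC: "?s \<in> carrier_vec N"
    using neumann_partial_invariant[OF g, of "\<lambda>x. x \<in> carrier_vec N"] g by (auto simp: shifted_carrier)
  have eC: "?e \<in> carrier_vec N" "(shifted A m ^^ k) g \<in> carrier_vec N" using g by (auto simp: shifted_pow_carrier)
  have IH: "shifted A m ?s + d \<cdot>\<^sub>v ?s = g - ?e" using Suc shifted_change_scalar[OF sC, of c m] d by simp
  have Ns: "shifted A m ?s = g - ?e - d \<cdot>\<^sub>v ?s"
    using IH sC eC g shifted_carrier[OF sC, of m] by (intro eq_vecI) (auto simp: vec_eq_iff eq_diff_eq)
  have "shifted A m (shifted A m ?s) = shifted A m (g - ?e - d \<cdot>\<^sub>v ?s)" by (simp only: Ns)
  also have "\<dots> = shifted A m g - shifted A m ?e - d \<cdot>\<^sub>v shifted A m ?s"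
    using sC eC g by (simp add: shifted_diff shifted_smult shifted_carrier)
  finally have NNs: "shifted A m (shifted A m ?s) = shifted A m g - shifted A m ?e - d \<cdot>\<^sub>v shifted A m ?s" .
  have NE: "shifted A m ?e = ((-1/d)^k) \<cdot>\<^sub>v (shifted A m ^^ Suc k) g"
    using eC by (simp add: shifted_smult)
  have C1: "shifted A m ?s \<in> carrier_vec N" "shifted A m g \<in> carrier_vec N" "shifted A m ?e \<in> carrier_vec N"
     "(shifted A m ^^ Suc k) g \<in> carrier_vec N"
    using sC g eC by (auto simp: shifted_carrier shifted_pow_carrier simp del: funpow.simps)
  have "shifted A c (neumann_partial A m d g (Suc k))
      = shifted A m ((1/d) \<cdot>\<^sub>v (g - shifted A m ?s)) + d \<cdot>\<^sub>v ((1/d) \<cdot>\<^sub>v (g - shifted A m ?s))"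
    using shifted_change_scalar[of "(1/d) \<cdot>\<^sub>v (g - shifted A m ?s)" c m] d C1 g by simp
  also have "\<dots> = (1/d) \<cdot>\<^sub>v (shifted A m g - shifted A m (shifted A m ?s)) + (g - shifted A m ?s)"
    using g C1 d sC by (simp add: shifted_smult shifted_diff shifted_carrier, intro eq_vecI, auto)
  also have "\<dots> = (1/d) \<cdot>\<^sub>v shifted A m ?e + g"
    unfolding NNs using C1 g sC d by (intro eq_vecI) (auto simp: field_simps)
  also have "\<dots> = g - ((-1/d)^Suc k) \<cdot>\<^sub>v (shifted A m ^^ Suc k) g"
    unfolding NE using C1 g d by (intro eq_vecI) (auto simp: field_simps simp del: funpow.simps)
  finally show ?case .
qed

lemma shifted_surj_on_gen_eigenspace:
  assumes g: "g \<in> gen_eigenspace A m" and mc: "m \<noteq> c"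
    and P0: "P (0\<^sub>v N)" and Padd: "\<And>x y. P x \<Longrightarrow> P y \<Longrightarrow> P (x + y)"
    and Psmult: "\<And>x a. P x \<Longrightarrow> P (a \<cdot>\<^sub>v x)" and Pshifted: "\<And>x. P x \<Longrightarrow> P (shifted A m x)"
    and Pcarrier: "\<And>x. P x \<Longrightarrow> x \<in> carrier_vec N" and Pg: "P g"
  shows "\<exists>s \<in> gen_eigenspace A m. P s \<and> shifted A c s = g"
proof -
  from g obtain k where gC: "g \<in> carrier_vec N" and k: "(shifted A m ^^ k) g = 0\<^sub>v N"
    by (auto simp: gen_eigenspace_iff)
  define d where "d = m - c"
  have d0: "d \<noteq> 0" using mc d_def by auto
  let ?s = "neumann_partial A m d g k"
  have "?s \<in> gen_eigenspace A m"
    using neumann_partial_invariant[OF gC, of "\<lambda>x. x \<in> gen_eigenspace A m"] g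
    by (auto simp: zero_in_gen_eigenspace gen_eigenspace_add gen_eigenspace_smult gen_eigenspace_shifted
        gen_eigenspace_carrier)
  moreover have "P ?s" using neumann_partial_invariant[OF gC, of P] assms by blast
  moreover have "shifted A c ?s = g" using shifted_neumann_partial[OF gC d_def d0, of k] k gC
    by (intro eq_vecI) auto
  ultimately show ?thesis by blast
qed

end

section \<open>Bases of generalized eigenvectors\<close>

definition supported_below :: "nat \<Rightarrow> nat \<Rightarrow> complex vec \<Rightarrow> bool" where
  "supported_below N m x \<longleftrightarrow> x \<in> carrier_vec N \<and> (\<forall>i. m \<le> i \<longrightarrow> i < N \<longrightarrow> x$i = 0)"

lemma supported_below_zero: "supported_below N m (0\<^sub>v N)"
  by (auto simp: supported_below_def)

lemma supported_below_add: "supported_below N m x \<Longrightarrow> supported_below N m y \<Longrightarrow> supported_below N m (x + y)"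
  by (auto simp: supported_below_def)

lemma supported_below_smult: "supported_below N m x \<Longrightarrow> supported_below N m (a \<cdot>\<^sub>v x)"
  by (auto simp: supported_below_def)

lemma supported_below_mono: "supported_below N m x \<Longrightarrow> m \<le> m' \<Longrightarrow> supported_below N m' x"
  by (auto simp: supported_below_def)

context
  fixes R :: "complex mat" and N :: nat
  assumes R: "R \<in> carrier_mat N N" and upper: "upper_triangular R"
begin

lemma supported_below_shifted:
  assumes x: "supported_below N m x"
  shows "supported_below N m (shifted R c x)"
proof -
  have xc: "x \<in> carrier_vec N" using x supported_below_def by auto
  have "(R *\<^sub>v x)$i = 0" if i: "m \<le> i" "i < N" for i
  proof -
    have "(R *\<^sub>v x)$i = (\<Sum>j<N. R$$(i,j) * x$j)" using mult_mat_vec_index_sum[OF R xc i(2)] .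
    also have "\<dots> = 0"
    proof (intro sum.neutral ballI)
      fix j assume j: "j \<in> {..<N}"
      show "R$$(i,j) * x$j = 0"
      proof (cases "j < i")
        case True then show ?thesis using upper R i by (auto simp: upper_triangular_def)
      next
        case False then show ?thesis using x i j by (auto simp: supported_below_def)
      qed
    qed
    finally show ?thesis .
  qed
  then show ?thesis using x R unfolding supported_below_def shifted_def by auto
qed

lemma supported_below_shifted_unit_vec:
  assumes j: "j < N"
  shows "supported_below N j (shifted R (R$$(j,j)) (unit_vec N j))"
proof -
  have "(shifted R (R$$(j,j)) (unit_vec N j))$i = 0" if i: "j \<le> i" "i < N" for i
    using R upper i j by (cases "i = j") (auto simp: shifted_def upper_triangular_def)
  then show ?thesis using R unfolding supported_below_def by (auto simp: shifted_carrier)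
qed

text \<open>Induction on m: a multiple of u_(m-1) removes the last coordinate of y; it lies either in
  the generalized eigenspace of c, or in one on which R - c is surjective.\<close>
lemma triangular_shifted_decomposition:
  assumes u: "\<And>i. i < j \<Longrightarrow> supported_below N (Suc i) (u i) \<and> (u i)$i \<noteq> 0 \<and> u i \<in> gen_eigenspace R (R$$(i,i))"
    and j: "j \<le> N"
  shows "m \<le> j \<Longrightarrow> supported_below N m y \<Longrightarrow>
    \<exists>z g. supported_below N j z \<and> g \<in> gen_eigenspace R c \<and> y = shifted R c z + g"
proof (induct m arbitrary: y)
  case 0
  then have "y = 0\<^sub>v N" by (intro eq_vecI) (auto simp: supported_below_def)
  then show ?case using R
    by (intro exI[of _ "0\<^sub>v N"]) (auto simp: supported_below_zero zero_in_gen_eigenspace shifted_zero)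
next
  case (Suc m)
  have mj: "m < j" using Suc by auto
  have um: "supported_below N (Suc m) (u m)" "(u m)$m \<noteq> 0" "u m \<in> gen_eigenspace R (R$$(m,m))"
    using u mj by auto
  define a where "a = y$m / (u m)$m"
  define y' where "y' = y - a \<cdot>\<^sub>v u m"
  have yc: "y \<in> carrier_vec N" "u m \<in> carrier_vec N" using Suc um by (auto simp: supported_below_def)
  have "supported_below N m y'"
    unfolding supported_below_def y'_def
  proof (intro conjI allI impI)
    fix i assume i: "m \<le> i" "i < N"
    show "(y - a \<cdot>\<^sub>v u m) $ i = 0"
    proof (cases "i = m")
      case True then show ?thesis using yc i um by (auto simp: a_def)
    next
      case False then have "Suc m \<le> i" using i by auto
      then show ?thesis using yc i um Suc.prems by (auto simp: supported_below_def)
    qed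
  qed (use yc in auto)
  from Suc.hyps[OF _ this] Suc.prems obtain z' g' where
    z': "supported_below N j z'" "g' \<in> gen_eigenspace R c" "y' = shifted R c z' + g'" by auto
  have z'c: "z' \<in> carrier_vec N" "g' \<in> carrier_vec N"
    using z' R by (auto simp: supported_below_def gen_eigenspace_carrier)
  have yy: "y = y' + a \<cdot>\<^sub>v u m" unfolding y'_def using yc by (intro eq_vecI) auto
  show ?case
  proof (cases "R$$(m,m) = c")
    case True
    have "g' + a \<cdot>\<^sub>v u m \<in> gen_eigenspace R c"
      using gen_eigenspace_add[OF R z'(2) gen_eigenspace_smult[OF R, of "u m" c a]] um True by auto
    moreover have "y = shifted R c z' + (g' + a \<cdot>\<^sub>v u m)" unfolding yy z'(3)
      using z'c yc R shifted_carrier[OF R z'c(1), of c] by (intro eq_vecI) auto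
    ultimately show ?thesis using z' by blast
  next
    case False
    have P: "supported_below N (Suc m) (a \<cdot>\<^sub>v u m)" "a \<cdot>\<^sub>v u m \<in> gen_eigenspace R (R$$(m,m))"
      using um R by (auto simp: supported_below_smult gen_eigenspace_smult)
    obtain s where s: "s \<in> gen_eigenspace R (R$$(m,m))" "supported_below N (Suc m) s"
      "shifted R c s = a \<cdot>\<^sub>v u m"
      using shifted_surj_on_gen_eigenspace[OF R P(2) False, of "supported_below N (Suc m)",
          OF supported_below_zero supported_below_add supported_below_smult supported_below_shifted _ P(1)]
      by (auto simp: supported_below_def)
    have sc: "s \<in> carrier_vec N" using s by (auto simp: supported_below_def)
    have "supported_below N j (z' + s)"
      using z' s mj supported_below_add supported_below_mono by (metis Suc_leI)
    moreover have "y = shifted R c (z' + s) + g'"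
      unfolding yy z'(3) shifted_add[OF R z'c(1) sc] s(3)
      using z'c yc R sc shifted_carrier[OF R z'c(1), of c] by (intro eq_vecI) auto
    ultimately show ?thesis using z' by blast
  qed
qed

lemma triangular_gen_eigenvectors:
  "j \<le> N \<Longrightarrow> \<exists>u. \<forall>i<j. supported_below N (Suc i) (u i) \<and> (u i)$i = 1 \<and> u i \<in> gen_eigenspace R (R$$(i,i))"
proof (induct j)
  case 0 then show ?case by auto
next
  case (Suc j)
  then obtain u where u: "\<forall>i<j. supported_below N (Suc i) (u i) \<and> (u i)$i = 1 \<and> u i \<in> gen_eigenspace R (R$$(i,i))"
    by auto
  have jN: "j < N" using Suc by auto
  let ?c = "R$$(j,j)"
  obtain z g where zg: "supported_below N j z" "g \<in> gen_eigenspace R ?c"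
    "shifted R ?c (unit_vec N j) = shifted R ?c z + g"
    using triangular_shifted_decomposition[where u=u and j=j and c="?c" and m=j]
      u jN supported_below_shifted_unit_vec[OF jN] by fastforce
  have zc: "z \<in> carrier_vec N" "g \<in> carrier_vec N"
    using zg R by (auto simp: supported_below_def gen_eigenspace_carrier)
  define w where "w = unit_vec N j - z"
  have wc: "w \<in> carrier_vec N" using zc w_def by auto
  have "shifted R ?c w = g"
    unfolding w_def using shifted_diff[OF R, of "unit_vec N j" z ?c] zg(3) zc
      shifted_carrier[OF R zc(1), of ?c] by (auto intro!: eq_vecI)
  then have wg: "w \<in> gen_eigenspace R ?c" using gen_eigenspace_shifted_rev[OF R wc] zg(2) by simp
  have wl: "supported_below N (Suc j) w" "w$j = 1"
    using zg(1) jN unfolding w_def supported_below_def by auto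
  show ?case using u wg wl by (intro exI[of _ "u(j := w)"]) (auto simp: less_Suc_eq)
qed

lemma triangular_gen_eigenbasis:
  "\<exists>U \<in> carrier_mat N N. (\<forall>x \<in> carrier_vec N. U *\<^sub>v x = 0\<^sub>v N \<longrightarrow> x = 0\<^sub>v N) \<and>
     (\<forall>j<N. col U j \<in> gen_eigenspace R (R$$(j,j)))"
proof -
  obtain u where u: "\<forall>i<N. supported_below N (Suc i) (u i) \<and> (u i)$i = 1 \<and> u i \<in> gen_eigenspace R (R$$(i,i))"
    using triangular_gen_eigenvectors by blast
  define U where "U = mat N N (\<lambda>(i,j). u j $ i)"
  have UC: "U \<in> carrier_mat N N" unfolding U_def by auto
  have cols: "col U j = u j" if "j < N" for j
    using u that unfolding U_def supported_below_def by (auto intro!: eq_vecI)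
  have "upper_triangular U"
    unfolding upper_triangular_def U_def using u by (auto simp: supported_below_def)
  then have "det U = prod_list (diag_mat U)" using det_upper_triangular UC by blast
  also have "\<dots> = 1" unfolding diag_mat_def U_def using u by (auto intro!: prod_list_neutral)
  finally have "det U \<noteq> 0" by simp
  then have "\<forall>x \<in> carrier_vec N. U *\<^sub>v x = 0\<^sub>v N \<longrightarrow> x = 0\<^sub>v N"
    using det_0_iff_vec_prod_zero[OF UC] by blast
  then show ?thesis using UC cols u by auto
qed

end

lemma shifted_similar:
  assumes A: "A = P * B * Q" and C: "P \<in> carrier_mat N N" "B \<in> carrier_mat N N" "Q \<in> carrier_mat N N"
    and QP: "Q * P = 1\<^sub>m N" and x: "x \<in> carrier_vec N"
  shows "(shifted A c ^^ k) (P *\<^sub>v x) = P *\<^sub>v (shifted B c ^^ k) x"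
proof (induct k)
  case 0 then show ?case by simp
next
  case (Suc k)
  have step: "shifted A c (P *\<^sub>v y) = P *\<^sub>v shifted B c y" if y: "y \<in> carrier_vec N" for y
  proof -
    have "A *\<^sub>v (P *\<^sub>v y) = P *\<^sub>v (B *\<^sub>v ((Q * P) *\<^sub>v y))" unfolding A using C y
      by (simp add: assoc_mult_mat_vec[of _ N N _ N])
    then have "A *\<^sub>v (P *\<^sub>v y) = P *\<^sub>v (B *\<^sub>v y)" using QP y by simp
    then show ?thesis unfolding shifted_def using C y by (simp add: mult_minus_distrib_mat_vec mult_mat_vec)
  qed
  show ?case using Suc step[OF shifted_pow_carrier[OF C(2) x]] by simp
qed

text \<open>Reduced to the upper triangular case by a Schur decomposition.\<close>
lemma gen_eigenbasis:
  assumes A: "A \<in> carrier_mat N N" and cp: "char_poly A = (\<Prod>e\<leftarrow>es. [:-e, 1:])"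
  shows "\<exists>V \<in> carrier_mat N N. (\<forall>x \<in> carrier_vec N. V *\<^sub>v x = 0\<^sub>v N \<longrightarrow> x = 0\<^sub>v N) \<and>
     (\<forall>j<N. col V j \<in> gen_eigenspace A (es!j))"
proof -
  obtain B P Q where s: "schur_decomposition A es = (B,P,Q)" by (cases "schur_decomposition A es") auto
  from schur_decomposition[OF A cp s] have sw: "similar_mat_wit A B P Q" and ut: "upper_triangular B"
    and dg: "diag_mat B = es" by auto
  from sw A have C: "B \<in> carrier_mat N N" "P \<in> carrier_mat N N" "Q \<in> carrier_mat N N"
    and PQ: "P * Q = 1\<^sub>m N" "Q * P = 1\<^sub>m N" and AE: "A = P * B * Q"
    unfolding similar_mat_wit_def Let_def by auto
  obtain U where U: "U \<in> carrier_mat N N" "\<forall>x \<in> carrier_vec N. U *\<^sub>v x = 0\<^sub>v N \<longrightarrow> x = 0\<^sub>v N"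
    "\<forall>j<N. col U j \<in> gen_eigenspace B (B$$(j,j))" using triangular_gen_eigenbasis[OF C(1) ut] by blast
  define V where "V = P * U"
  have VC: "V \<in> carrier_mat N N" using C U unfolding V_def by auto
  have "x = 0\<^sub>v N" if x: "x \<in> carrier_vec N" and Vx: "V *\<^sub>v x = 0\<^sub>v N" for x
  proof -
    have "Q *\<^sub>v (V *\<^sub>v x) = (Q * P) *\<^sub>v (U *\<^sub>v x)" unfolding V_def using C U x by auto
    then have "U *\<^sub>v x = 0\<^sub>v N" using PQ U x Vx C by (auto simp: mult_mat_vec_zero)
    then show "x = 0\<^sub>v N" using U x by auto
  qed
  moreover have "col V j \<in> gen_eigenspace A (es!j)" if j: "j < N" for j
  proof -
    have cV: "col V j = P *\<^sub>v col U j" unfolding V_def using col_mult2[OF C(2) U(1) j] .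
    have e: "es!j = B$$(j,j)" using dg[symmetric] j C unfolding diag_mat_def by auto
    from U(3) j obtain k where uc: "col U j \<in> carrier_vec N" and k: "(shifted B (B$$(j,j)) ^^ k) (col U j) = 0\<^sub>v N"
      using C by (auto simp: gen_eigenspace_iff)
    have "(shifted A (es!j) ^^ k) (col V j) = 0\<^sub>v N" unfolding cV e
      using shifted_similar[OF AE C(2,1,3) PQ(2) uc] k C by (simp add: mult_mat_vec_zero)
    then show ?thesis using A VC j by (auto simp: gen_eigenspace_iff)
  qed
  ultimately show ?thesis using VC by blast
qed

section \<open>Self-adjoint matrices\<close>

definition self_adjoint :: "nat \<Rightarrow> complex mat \<Rightarrow> bool" where
  "self_adjoint k M \<longleftrightarrow> M \<in> carrier_mat k k \<and>
     (\<forall>x\<in>carrier_vec k. \<forall>y\<in>carrier_vec k. (M *\<^sub>v x) \<bullet>c y = x \<bullet>c (M *\<^sub>v y))"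

context
  fixes M :: "complex mat" and k :: nat
  assumes M: "self_adjoint k M"
begin

lemma self_adjoint_carrier: "M \<in> carrier_mat k k"
  using M by (simp add: self_adjoint_def)

lemma self_adjoint_cscalar_prod:
  "x \<in> carrier_vec k \<Longrightarrow> y \<in> carrier_vec k \<Longrightarrow> (M *\<^sub>v x) \<bullet>c y = x \<bullet>c (M *\<^sub>v y)"
  using M by (simp add: self_adjoint_def)

lemma self_adjoint_shifted:
  assumes a: "cnj a = a" and x: "x \<in> carrier_vec k" and y: "y \<in> carrier_vec k"
  shows "shifted M a x \<bullet>c y = x \<bullet>c shifted M a y"
  using self_adjoint_cscalar_prod[OF x y] self_adjoint_carrier x y a
  by (simp add: shifted_def cscalar_prod_diff_left[of _ k] cscalar_prod_diff_right[of _ k]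
      cscalar_prod_smult_left[of _ k] cscalar_prod_smult_right[of _ k])

lemma self_adjoint_eigenvectors_orthogonal:
  assumes x: "x \<in> carrier_vec k" "M *\<^sub>v x = a \<cdot>\<^sub>v x" and y: "y \<in> carrier_vec k" "M *\<^sub>v y = b \<cdot>\<^sub>v y"
    and ab: "a \<noteq> cnj b"
  shows "x \<bullet>c y = 0"
proof -
  have "a * (x \<bullet>c y) = cnj b * (x \<bullet>c y)"
    using self_adjoint_cscalar_prod[OF x(1) y(1)] x y
    by (simp add: cscalar_prod_smult_left[of _ k] cscalar_prod_smult_right[of _ k])
  then show ?thesis using ab by simp
qed

lemma self_adjoint_eigenvalue_real:
  assumes "eigenvalue M a"
  shows "cnj a = a"
proof (rule ccontr)
  assume "cnj a \<noteq> a"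
  from assms obtain x where x: "x \<in> carrier_vec k" "x \<noteq> 0\<^sub>v k" "M *\<^sub>v x = a \<cdot>\<^sub>v x"
    using self_adjoint_carrier unfolding eigenvalue_def eigenvector_def by auto
  have "x \<bullet>c x = 0"
    using self_adjoint_eigenvectors_orthogonal[OF x(1,3) x(1,3)] \<open>cnj a \<noteq> a\<close> by auto
  then show False using x by simp
qed

text \<open>For real a the operator M - a is again self-adjoint, so its kernel and the kernel of its
  square agree; hence generalized eigenvectors are eigenvectors.\<close>
lemma self_adjoint_gen_eigenvector:
  assumes a: "cnj a = a" and x: "x \<in> gen_eigenspace M a"
  shows "M *\<^sub>v x = a \<cdot>\<^sub>v x"
proof -
  note MC = self_adjoint_carrier
  have square: "shifted M a w = 0\<^sub>v k" if w: "w \<in> carrier_vec k" and h: "shifted M a (shifted M a w) = 0\<^sub>v k" for w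
  proof -
    have sw: "shifted M a w \<in> carrier_vec k" using shifted_carrier[OF MC w] .
    have "shifted M a w \<bullet>c shifted M a w = w \<bullet>c shifted M a (shifted M a w)"
      using self_adjoint_shifted[OF a w sw] .
    also have "\<dots> = 0" using h w by simp
    finally show ?thesis using sw by simp
  qed
  have vanish: "(shifted M a ^^ Suc j) v = 0\<^sub>v k \<Longrightarrow> shifted M a v = 0\<^sub>v k" if v: "v \<in> carrier_vec k" for j v
  proof (induct j)
    case (Suc j)
    have "shifted M a (shifted M a ((shifted M a ^^ j) v)) = 0\<^sub>v k" using Suc.prems by simp
    then have "(shifted M a ^^ Suc j) v = 0\<^sub>v k"
      using square[OF shifted_pow_carrier[OF MC v]] by simp
    then show ?case by (rule Suc.hyps)
  qed simp
  from x obtain j where xc: "x \<in> carrier_vec k" and j: "(shifted M a ^^ j) x = 0\<^sub>v k"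
    using gen_eigenspace_iff[OF MC] by blast
  have "(shifted M a ^^ Suc j) x = 0\<^sub>v k" using j MC by (simp add: shifted_zero)
  then have "shifted M a x = 0\<^sub>v k" using vanish[OF xc] by blast
  then show ?thesis using xc MC unfolding shifted_def by (intro eq_vecI) (auto simp: vec_eq_iff)
qed

lemma self_adjoint_eigenbasis:
  assumes cp: "char_poly M = (\<Prod>f\<leftarrow>fs. [:-f, 1:])"
  shows "\<exists>Y \<in> carrier_mat k k. (\<forall>x \<in> carrier_vec k. Y *\<^sub>v x = 0\<^sub>v k \<longrightarrow> x = 0\<^sub>v k) \<and>
     (\<forall>j<k. M *\<^sub>v col Y j = fs!j \<cdot>\<^sub>v col Y j \<and> cnj (fs!j) = fs!j)"
proof -
  note MC = self_adjoint_carrier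
  obtain Y where Y: "Y \<in> carrier_mat k k" and inj: "\<forall>x \<in> carrier_vec k. Y *\<^sub>v x = 0\<^sub>v k \<longrightarrow> x = 0\<^sub>v k"
    and gen: "\<forall>j<k. col Y j \<in> gen_eigenspace M (fs!j)"
    using gen_eigenbasis[OF MC cp] by blast
  have "M *\<^sub>v col Y j = fs!j \<cdot>\<^sub>v col Y j \<and> cnj (fs!j) = fs!j" if j: "j < k" for j
  proof -
    have "unit_vec k j \<noteq> 0\<^sub>v k" using j by (auto simp: vec_eq_iff)
    then have "Y *\<^sub>v unit_vec k j \<noteq> 0\<^sub>v k" using inj j by auto
    then have "col Y j \<noteq> 0\<^sub>v k" using Y j by (simp add: mult_mat_vec_unit_vec)
    then have "cnj (fs!j) = fs!j"
      using self_adjoint_eigenvalue_real eigenvalue_if_gen_eigenspace[OF MC] gen j by blast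
    then show ?thesis using self_adjoint_gen_eigenvector gen j by blast
  qed
  then show ?thesis using Y inj by blast
qed


text \<open>Rescaling the coefficients by sqrt (sg * lam j) turns the form into sg times the squared
  norm, since eigenvectors of distinct eigenvalues are orthogonal.\<close>
lemma self_adjoint_definite_on_eigenvectors:
  assumes U: "U \<in> carrier_mat k p" and inj: "\<forall>x \<in> carrier_vec p. U *\<^sub>v x = 0\<^sub>v k \<longrightarrow> x = 0\<^sub>v p"
    and ev: "\<And>j. j < p \<Longrightarrow> M *\<^sub>v col U j = complex_of_real (lam j) \<cdot>\<^sub>v col U j"
    and sg: "sg = 1 \<or> sg = (-1::real)" and pos: "\<And>j. j < p \<Longrightarrow> 0 < sg * lam j"
    and c: "c \<in> carrier_vec p" "c \<noteq> 0\<^sub>v p"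
  shows "0 < sg * Re ((M *\<^sub>v (U *\<^sub>v c)) \<bullet>c (U *\<^sub>v c))"
proof -
  note MC = self_adjoint_carrier
  define s where "s j = sqrt (sg * lam j)" for j
  define w where "w = vec p (\<lambda>j. complex_of_real (s j) * c$j)"
  define G where "G j l = col U j \<bullet>c col U l" for j l
  have wc: "w \<in> carrier_vec p" unfolding w_def by auto
  have Uc: "U *\<^sub>v c \<in> carrier_vec k" "U *\<^sub>v w \<in> carrier_vec k" using U c wc by auto
  have key: "lam j * G j l = sg * (s j * s l) * G j l" if jl: "j < p" "l < p" for j l
  proof (cases "lam j = lam l")
    case True
    have "s j * s l = sg * lam l" unfolding s_def True using pos[OF jl(2)] by simp
    then have "sg * (s j * s l) = lam j" using sg True by auto
    then show ?thesis by (metis of_real_mult)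
  next
    case False
    then have "G j l = 0" unfolding G_def
      using self_adjoint_eigenvectors_orthogonal[OF _ ev[OF jl(1)] _ ev[OF jl(2)]] U jl by auto
    then show ?thesis by simp
  qed
  have "M *\<^sub>v (U *\<^sub>v c) = (M * U) *\<^sub>v c" using MC U c by simp
  then have "(M *\<^sub>v (U *\<^sub>v c)) \<bullet>c (U *\<^sub>v c) = (\<Sum>j<p. c$j * (col (M * U) j \<bullet>c (U *\<^sub>v c)))"
    using MC U c Uc mult_mat_vec_cscalar_prod_left[of "M * U" k p c "U *\<^sub>v c"] by simp
  also have "\<dots> = (\<Sum>j<p. c$j * (lam j * (col U j \<bullet>c (U *\<^sub>v c))))"
  proof (intro sum.cong refl)
    fix j assume "j \<in> {..<p}"
    then have "col (M * U) j = complex_of_real (lam j) \<cdot>\<^sub>v col U j" using col_mult2[OF MC U] ev by simp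
    then show "c$j * (col (M * U) j \<bullet>c (U *\<^sub>v c)) = c$j * (lam j * (col U j \<bullet>c (U *\<^sub>v c)))"
      using U Uc \<open>j \<in> {..<p}\<close> by (simp add: cscalar_prod_smult_left[of _ k])
  qed
  also have "\<dots> = (\<Sum>j<p. c$j * (lam j * (\<Sum>l<p. cnj (c$l) * G j l)))"
    unfolding G_def using U c by (intro sum.cong refl) (simp add: mult_mat_vec_cscalar_prod_right)
  also have "\<dots> = (\<Sum>j<p. \<Sum>l<p. c$j * cnj (c$l) * (lam j * G j l))"
    by (simp only: sum_distrib_left) (simp only: mult.assoc mult.left_commute)
  also have "\<dots> = (\<Sum>j<p. \<Sum>l<p. sg * ((s j * c$j) * cnj (s l * c$l) * G j l))"
  proof (intro sum.cong refl)
    fix j l assume "j \<in> {..<p}" "l \<in> {..<p}"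
    then have "c$j * cnj (c$l) * (lam j * G j l) = c$j * cnj (c$l) * (sg * (s j * s l) * G j l)"
      using key by simp
    then show "c$j * cnj (c$l) * (lam j * G j l) = sg * ((s j * c$j) * cnj (s l * c$l) * G j l)"
      by (simp add: algebra_simps)
  qed
  also have "\<dots> = sg * (\<Sum>j<p. \<Sum>l<p. w$j * cnj (w$l) * G j l)"
    unfolding w_def by (simp add: sum_distrib_left)
  also have "(\<Sum>j<p. \<Sum>l<p. w$j * cnj (w$l) * G j l) = (\<Sum>j<p. w$j * (\<Sum>l<p. cnj (w$l) * G j l))"
    by (simp only: sum_distrib_left) (simp only: mult.assoc)
  also have "\<dots> = (U *\<^sub>v w) \<bullet>c (U *\<^sub>v w)"
    unfolding G_def using U wc
    by (subst mult_mat_vec_cscalar_prod_left[OF U wc Uc(2)]) (simp add: mult_mat_vec_cscalar_prod_right)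
  finally have eq: "(M *\<^sub>v (U *\<^sub>v c)) \<bullet>c (U *\<^sub>v c) = sg * ((U *\<^sub>v w) \<bullet>c (U *\<^sub>v w))" .
  have "w \<noteq> 0\<^sub>v p"
  proof
    assume w0: "w = 0\<^sub>v p"
    have "c$j = 0" if j: "j < p" for j
    proof -
      have "complex_of_real (s j) * c$j = 0" using w0 j unfolding w_def by (metis index_vec index_zero_vec(1))
      moreover have "s j \<noteq> 0" using pos[OF j] unfolding s_def by auto
      ultimately show ?thesis by simp
    qed
    then show False using c by (auto simp: vec_eq_iff)
  qed
  then have "0 < Re ((U *\<^sub>v w) \<bullet>c (U *\<^sub>v w))" using inj wc Uc cscalar_prod_self_pos by blast
  then show ?thesis unfolding eq using sg by auto
qed

end

section \<open>The Krein form\<close>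

definition J_form :: "nat \<Rightarrow> complex vec \<Rightarrow> complex vec \<Rightarrow> complex" where
  "J_form n x y = (J_mat n *\<^sub>v x) \<bullet>c y"

lemma J_mat_carrier: "J_mat n \<in> carrier_mat (2*n) (2*n)"
  unfolding J_mat_def by auto

lemma J_mat_mult_vec_index:
  assumes "w \<in> carrier_vec (2*n)" "i < 2*n"
  shows "(J_mat n *\<^sub>v w)$i = (if i < n then w$i else - w$i)"
proof -
  have "(J_mat n *\<^sub>v w)$i = (\<Sum>j<2*n. J_mat n $$ (i,j) * w$j)"
    using mult_mat_vec_index_sum[OF J_mat_carrier assms] .
  also have "\<dots> = (\<Sum>j<2*n. if j = i then (if i < n then w$i else - w$i) else 0)"
    using assms by (intro sum.cong) (auto simp: J_mat_def)
  finally show ?thesis using assms by simp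
qed

lemma J_form_expand:
  assumes "x \<in> carrier_vec (2*n)" "y \<in> carrier_vec (2*n)"
  shows "J_form n x y = (\<Sum>i<2*n. (if i < n then 1 else -1) * (x$i * cnj (y$i)))"
  unfolding J_form_def cscalar_prod_eq_sum[OF assms(2)] using J_mat_mult_vec_index[OF assms(1)]
  by (auto intro!: sum.cong)

lemma J_form_conjugate:
  assumes "x \<in> carrier_vec (2*n)" "y \<in> carrier_vec (2*n)"
  shows "cnj (J_form n x y) = J_form n y x"
  using assms by (auto simp: J_form_expand mult.commute intro!: sum.cong)

lemma J_form_add_left:
  "x \<in> carrier_vec (2*n) \<Longrightarrow> y \<in> carrier_vec (2*n) \<Longrightarrow> z \<in> carrier_vec (2*n) \<Longrightarrow>
   J_form n (x + y) z = J_form n x z + J_form n y z"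
  unfolding J_form_def using J_mat_carrier[of n]
  by (simp add: mult_add_distrib_mat_vec cscalar_prod_add_left[of _ "2*n"])

lemma J_form_add_right:
  "x \<in> carrier_vec (2*n) \<Longrightarrow> y \<in> carrier_vec (2*n) \<Longrightarrow> z \<in> carrier_vec (2*n) \<Longrightarrow>
   J_form n z (x + y) = J_form n z x + J_form n z y"
  unfolding J_form_def using J_mat_carrier[of n] by (simp add: cscalar_prod_add_right[of _ "2*n"])

lemma J_form_smult_left:
  "x \<in> carrier_vec (2*n) \<Longrightarrow> z \<in> carrier_vec (2*n) \<Longrightarrow> J_form n (a \<cdot>\<^sub>v x) z = a * J_form n x z"
  unfolding J_form_def using J_mat_carrier[of n]
  by (simp add: mult_mat_vec cscalar_prod_smult_left[of _ "2*n"])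

lemma J_form_smult_right:
  "x \<in> carrier_vec (2*n) \<Longrightarrow> z \<in> carrier_vec (2*n) \<Longrightarrow> J_form n z (a \<cdot>\<^sub>v x) = cnj a * J_form n z x"
  unfolding J_form_def using J_mat_carrier[of n] by (simp add: cscalar_prod_smult_right[of _ "2*n"])

lemma J_form_zero_left: "z \<in> carrier_vec (2*n) \<Longrightarrow> J_form n (0\<^sub>v (2*n)) z = 0"
  unfolding J_form_def using J_mat_carrier[of n] by (simp add: mult_mat_vec_zero)

lemma J_form_zero_right: "z \<in> carrier_vec (2*n) \<Longrightarrow> J_form n z (0\<^sub>v (2*n)) = 0"
  unfolding J_form_def using J_mat_carrier[of n] by simp

lemma J_form_nondegenerate:
  assumes w: "w \<in> carrier_vec (2*n)" and orth: "\<forall>v \<in> carrier_vec (2*n). J_form n w v = 0"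
  shows "w = 0\<^sub>v (2*n)"
proof -
  have Jw: "J_mat n *\<^sub>v w \<in> carrier_vec (2*n)" using J_mat_carrier[of n] w by auto
  then have "J_mat n *\<^sub>v w = 0\<^sub>v (2*n)" using orth unfolding J_form_def by auto
  then show ?thesis using w J_mat_mult_vec_index[OF w] by (intro eq_vecI) (auto simp: vec_eq_iff split: if_splits)
qed

lemma J_form_compression:
  assumes Phi: "Phi \<in> carrier_mat (2*n) k" and x: "x \<in> carrier_vec k" and y: "y \<in> carrier_vec k"
  shows "J_form n (Phi *\<^sub>v x) (Phi *\<^sub>v y) = ((mat_adjoint Phi * J_mat n * Phi) *\<^sub>v x) \<bullet>c y"
proof -
  have PA: "mat_adjoint Phi \<in> carrier_mat k (2*n)" using mat_adjoint_carrier[OF Phi] .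
  have "J_form n (Phi *\<^sub>v x) (Phi *\<^sub>v y) = (mat_adjoint Phi *\<^sub>v (J_mat n *\<^sub>v (Phi *\<^sub>v x))) \<bullet>c y"
    unfolding J_form_def using Phi x y J_mat_carrier[of n]
      cscalar_prod_conjugate[of _ k] cscalar_prod_conjugate[of _ "2*n"]
      cscalar_prod_mat_adjoint[OF Phi y, of "J_mat n *\<^sub>v (Phi *\<^sub>v x)"] PA
    by (metis mult_mat_vec_carrier)
  also have "mat_adjoint Phi *\<^sub>v (J_mat n *\<^sub>v (Phi *\<^sub>v x)) = (mat_adjoint Phi * J_mat n * Phi) *\<^sub>v x"
    using PA J_mat_carrier[of n] Phi x by (simp add: assoc_mult_mat_vec[of _ k "2*n" _ k]
      assoc_mult_mat_vec[of _ "2*n" "2*n" _ k] assoc_mult_mat[of _ k "2*n" _ "2*n" _ k])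
  finally show ?thesis .
qed

lemma J_unitary_J_form:
  assumes T: "J_unitary n T" and x: "x \<in> carrier_vec (2*n)" and y: "y \<in> carrier_vec (2*n)"
  shows "J_form n (T *\<^sub>v x) (T *\<^sub>v y) = J_form n x y"
proof -
  have "T \<in> carrier_mat (2*n) (2*n)" "mat_adjoint T * J_mat n * T = J_mat n"
    using T unfolding J_unitary_def by auto
  then show ?thesis
    using J_form_compression[of T n "2*n" x y] x y by (simp add: J_form_def)
qed

lemma J_form_mult_mat_vec_left:
  assumes Y: "Y \<in> carrier_mat (2*n) m" and a: "a \<in> carrier_vec m" and x: "x \<in> carrier_vec (2*n)"
  shows "J_form n (Y *\<^sub>v a) x = (\<Sum>j<m. a$j * J_form n (col Y j) x)"
proof -
  have JY: "J_mat n * Y \<in> carrier_mat (2*n) m" using J_mat_carrier[of n] Y by auto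
  have "J_form n (Y *\<^sub>v a) x = ((J_mat n * Y) *\<^sub>v a) \<bullet>c x"
    unfolding J_form_def using J_mat_carrier[of n] Y a by (simp add: assoc_mult_mat_vec[of _ "2*n" "2*n" _ m])
  also have "\<dots> = (\<Sum>j<m. a$j * (col (J_mat n * Y) j \<bullet>c x))"
    using mult_mat_vec_cscalar_prod_left[OF JY a x] .
  also have "\<dots> = (\<Sum>j<m. a$j * J_form n (col Y j) x)"
    unfolding J_form_def using col_mult2[OF J_mat_carrier Y] by (intro sum.cong) auto
  finally show ?thesis .
qed

lemma J_form_mult_mat_vec_right:
  assumes Y: "Y \<in> carrier_mat (2*n) m" and b: "b \<in> carrier_vec m" and x: "x \<in> carrier_vec (2*n)"
  shows "J_form n x (Y *\<^sub>v b) = (\<Sum>j<m. cnj (b$j) * J_form n x (col Y j))"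
  unfolding J_form_def using mult_mat_vec_cscalar_prod_right[OF Y b] J_mat_carrier[of n] x by simp

lemma J_form_neutral_of_cols:
  assumes V: "V \<in> carrier_mat (2*n) b"
    and cols: "\<And>j l. j < b \<Longrightarrow> l < b \<Longrightarrow> J_form n (col V j) (col V l) = 0"
    and d: "d \<in> carrier_vec b" and d': "d' \<in> carrier_vec b"
  shows "J_form n (V *\<^sub>v d) (V *\<^sub>v d') = 0"
  using V d d' cols
  by (simp add: J_form_mult_mat_vec_left J_form_mult_mat_vec_right)

lemma J_form_span_orthogonal:
  assumes G: "G \<subseteq> carrier_vec (2*n)" and v: "v \<in> carrier_vec (2*n)" and orth: "\<forall>g\<in>G. J_form n g v = 0"
    and e: "e \<in> module.span class_ring (module_vec TYPE(complex) (2*n)) G"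
  shows "J_form n e v = 0"
proof -
  interpret vs: vec_space "TYPE(complex)" "2*n" .
  define H where "H = {e \<in> carrier_vec (2*n). J_form n e v = 0}"
  have "LinearCombinations.submodule class_ring H (module_vec TYPE(complex) (2*n))"
    by (rule LinearCombinations.submodule.intro)
      (auto simp: H_def module_vec_simps v J_form_zero_left J_form_add_left J_form_smult_left intro: vec_module)
  moreover have "G \<subseteq> H" using G orth unfolding H_def by auto
  ultimately show ?thesis using vs.span_is_subset e unfolding H_def by blast
qed

lemma mult_cnj_ne_one: "cmod z * cmod w \<noteq> 1 \<Longrightarrow> z * cnj w \<noteq> 1"
  by (metis complex_mod_cnj norm_mult norm_one)

text \<open>Krein orthogonality, by induction on the sum of the nilpotency orders: expanding
  [T x, T y] = [x, y] with T x = (T - z) x + z x and T y = (T - w) y + w y leaves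
  (1 - z * cnj w) [x, y] = 0.\<close>
lemma J_unitary_gen_eigenspaces_orthogonal:
  assumes T: "J_unitary n T" and zw: "z * cnj w \<noteq> 1"
    and x: "x \<in> gen_eigenspace T z" and y: "y \<in> gen_eigenspace T w"
  shows "J_form n x y = 0"
proof -
  have TC: "T \<in> carrier_mat (2*n) (2*n)" using T unfolding J_unitary_def by auto
  have "\<forall>k1 k2 x y. k1 + k2 < s \<longrightarrow> (shifted T z ^^ k1) x = 0\<^sub>v (2*n) \<longrightarrow>
      (shifted T w ^^ k2) y = 0\<^sub>v (2*n) \<longrightarrow> x \<in> carrier_vec (2*n) \<longrightarrow> y \<in> carrier_vec (2*n) \<longrightarrow>
      J_form n x y = 0" for s
  proof (induct s)
    case (Suc s)
    show ?case
    proof (intro allI impI)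
      fix k1 k2 x y assume ks: "k1 + k2 < Suc s" and hk1: "(shifted T z ^^ k1) x = 0\<^sub>v (2*n)"
        and hk2: "(shifted T w ^^ k2) y = 0\<^sub>v (2*n)"
        and xc: "x \<in> carrier_vec (2*n)" and yc: "y \<in> carrier_vec (2*n)"
      show "J_form n x y = 0"
      proof (cases "k1 = 0 \<or> k2 = 0")
        case True then show ?thesis using hk1 hk2 xc yc by (auto simp: J_form_zero_left J_form_zero_right)
      next
        case False
        then obtain l1 l2 where k: "k1 = Suc l1" "k2 = Suc l2" by (cases k1; cases k2) auto
        let ?x = "shifted T z x" and ?y = "shifted T w y"
        have c: "?x \<in> carrier_vec (2*n)" "?y \<in> carrier_vec (2*n)"
          using shifted_carrier[OF TC] xc yc by auto
        have hx: "(shifted T z ^^ l1) ?x = 0\<^sub>v (2*n)" using hk1 k by (simp add: funpow_Suc_right del: funpow.simps)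
        have hy: "(shifted T w ^^ l2) ?y = 0\<^sub>v (2*n)" using hk2 k by (simp add: funpow_Suc_right del: funpow.simps)
        have e1: "J_form n ?x ?y = 0" using Suc.hyps[rule_format, of l1 l2 ?x ?y] k ks hx hy c by auto
        have e2: "J_form n ?x y = 0" using Suc.hyps[rule_format, of l1 k2 ?x y] k ks hx hk2 c yc by auto
        have e3: "J_form n x ?y = 0" using Suc.hyps[rule_format, of k1 l2 x ?y] k ks hk1 hy c xc by auto
        have Tx: "T *\<^sub>v x = ?x + z \<cdot>\<^sub>v x" "T *\<^sub>v y = ?y + w \<cdot>\<^sub>v y"
          using xc yc TC unfolding shifted_def by (auto intro!: eq_vecI)
        have "J_form n x y = J_form n (T *\<^sub>v x) (T *\<^sub>v y)" using J_unitary_J_form[OF T xc yc] by simp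
        also have "\<dots> = J_form n ?x ?y + cnj w * J_form n ?x y + z * J_form n x ?y + z * cnj w * J_form n x y"
          unfolding Tx using c xc yc
          by (simp add: J_form_add_left J_form_add_right J_form_smult_left J_form_smult_right algebra_simps)
        finally have "J_form n x y * (1 - z * cnj w) = 0" using e1 e2 e3 by (simp add: algebra_simps)
        then show ?thesis using zw by simp
      qed
    qed
  qed simp
  moreover obtain k1 k2 where "(shifted T z ^^ k1) x = 0\<^sub>v (2*n)" "(shifted T w ^^ k2) y = 0\<^sub>v (2*n)"
    "x \<in> carrier_vec (2*n)" "y \<in> carrier_vec (2*n)" using x y gen_eigenspace_iff[OF TC] by blast
  ultimately show ?thesis by (meson lessI)
qed

section \<open>Dimension of J-semidefinite subspaces\<close>

lemma injective_mat_cols_le_rows: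
  assumes A: "(A :: complex mat) \<in> carrier_mat N m" and inj: "\<forall>x \<in> carrier_vec m. A *\<^sub>v x = 0\<^sub>v N \<longrightarrow> x = 0\<^sub>v m"
  shows "m \<le> N"
proof (rule ccontr)
  assume "\<not> m \<le> N"
  then have mN: "N < m" by auto
  define B where "B = mat m m (\<lambda>(i,j). if i < N then A$$(i,j) else 0)"
  have BC: "B \<in> carrier_mat m m" unfolding B_def by auto
  have BT: "transpose_mat B \<in> carrier_mat m m" using BC by auto
  have "transpose_mat B *\<^sub>v unit_vec m (m - 1) = 0\<^sub>v m"
    using mN unfolding B_def by (intro eq_vecI) (auto simp: scalar_prod_def)
  moreover have "unit_vec m (m - 1) \<noteq> 0\<^sub>v m" using mN by (auto simp: vec_eq_iff)
  ultimately have "det (transpose_mat B) = 0" using det_0_iff_vec_prod_zero[OF BT] by force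
  then have "det B = 0" using det_transpose[OF BC] by simp
  then obtain v where v: "v \<in> carrier_vec m" "v \<noteq> 0\<^sub>v m" "B *\<^sub>v v = 0\<^sub>v m"
    using det_0_iff_vec_prod_zero[OF BC] by auto
  have "A *\<^sub>v v = 0\<^sub>v N"
  proof (intro eq_vecI)
    fix i assume "i < dim_vec (0\<^sub>v N)"
    then have i: "i < N" "i < m" using mN by auto
    have "(A *\<^sub>v v)$i = (\<Sum>j<m. A$$(i,j) * v$j)" using mult_mat_vec_index_sum[OF A v(1) i(1)] .
    also have "\<dots> = (\<Sum>j<m. B$$(i,j) * v$j)" unfolding B_def using i by (auto intro!: sum.cong)
    also have "\<dots> = (B *\<^sub>v v)$i" using mult_mat_vec_index_sum[OF BC v(1) i(2)] by simp
    finally show "(A *\<^sub>v v)$i = 0\<^sub>v N $ i" using v(3) i by simp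
  qed (use A in auto)
  then show False using inj v by auto
qed

lemma injective_mat_surjective:
  assumes V: "(V :: complex mat) \<in> carrier_mat N N" and inj: "\<forall>x \<in> carrier_vec N. V *\<^sub>v x = 0\<^sub>v N \<longrightarrow> x = 0\<^sub>v N"
    and x: "x \<in> carrier_vec N"
  shows "\<exists>d \<in> carrier_vec N. V *\<^sub>v d = x"
proof -
  have "det V \<noteq> 0" using det_0_iff_vec_prod_zero[OF V] inj by auto
  from det_non_zero_imp_unit[OF V this, of "()"] obtain B where B: "B \<in> carrier_mat N N" "V * B = 1\<^sub>m N"
    unfolding Units_def by (auto simp: ring_mat_def)
  then have "V *\<^sub>v (B *\<^sub>v x) = x" using V x by (simp add: assoc_mult_mat_vec[symmetric, of V N N B N x])
  then show ?thesis using B x by (intro bexI[of _ "B *\<^sub>v x"]) auto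
qed

text \<open>If x = X c vanishes on the n coordinates where sg * J is positive, then
  sg * [x, x] = -|x|^2, so x = 0: the rows of X for those n coordinates still form an injective
  matrix.\<close>
lemma J_semidefinite_dim_le:
  assumes X: "X \<in> carrier_mat (2*n) m" and inj: "\<forall>c \<in> carrier_vec m. X *\<^sub>v c = 0\<^sub>v (2*n) \<longrightarrow> c = 0\<^sub>v m"
    and sg: "sg = 1 \<or> sg = (-1::real)"
    and semidef: "\<forall>c \<in> carrier_vec m. 0 \<le> sg * Re (J_form n (X *\<^sub>v c) (X *\<^sub>v c))"
  shows "m \<le> n"
proof -
  define off where "off = (if sg = 1 then 0 else n)"
  define X1 where "X1 = mat n m (\<lambda>(i,j). X$$(off + i,j))"
  have X1C: "X1 \<in> carrier_mat n m" unfolding X1_def by auto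
  have "c = 0\<^sub>v m" if c: "c \<in> carrier_vec m" and z: "X1 *\<^sub>v c = 0\<^sub>v n" for c
  proof -
    let ?x = "X *\<^sub>v c"
    have xc: "?x \<in> carrier_vec (2*n)" using X c by auto
    have vanish: "?x$i = 0" if i: "i < 2*n" and ii: "if sg = 1 then i < n else n \<le> i" for i
    proof -
      define i' where "i' = i - off"
      have i': "i' < n" "i = off + i'" using i ii unfolding i'_def off_def by (auto split: if_splits)
      have "(X1 *\<^sub>v c)$i' = (\<Sum>j<m. X1$$(i',j) * c$j)" using mult_mat_vec_index_sum[OF X1C c i'(1)] .
      also have "\<dots> = (\<Sum>j<m. X$$(i,j) * c$j)" unfolding X1_def using i' by auto
      also have "\<dots> = ?x$i" using mult_mat_vec_index_sum[OF X c i] by simp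
      finally show "?x$i = 0" using z i' by simp
    qed
    have term_eq: "sg * Re ((if i < n then 1 else -1) * (?x$i * cnj (?x$i))) = - (cmod (?x $ i))\<^sup>2"
      if i: "i < 2*n" for i
    proof (cases "?x$i = 0")
      case False
      then have "\<not> (if sg = 1 then i < n else n \<le> i)" using vanish i by blast
      then show ?thesis using sg by (cases "sg = 1") (auto simp: complex_mult_cnj cmod_power2)
    qed simp
    have "sg * Re (J_form n ?x ?x) = (\<Sum>i<2*n. - (cmod (?x $ i))\<^sup>2)"
      unfolding J_form_expand[OF xc xc] using term_eq by (simp add: Re_sum sum_distrib_left)
    then have "(\<Sum>i<2*n. (cmod (?x $ i))\<^sup>2) \<le> 0"
      using semidef[rule_format, OF c] by (simp add: sum_negf)
    then have "(\<Sum>i<2*n. (cmod (?x $ i))\<^sup>2) = 0"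
      using sum_nonneg[of "{..<2*n}" "\<lambda>i. (cmod (?x $ i))\<^sup>2"] by simp
    then have "?x = 0\<^sub>v (2*n)" using xc X by (intro eq_vecI) (auto simp: sum_nonneg_eq_0_iff)
    then show "c = 0\<^sub>v m" using inj c by auto
  qed
  then show ?thesis using injective_mat_cols_le_rows[OF X1C] by auto
qed

definition append_cols :: "complex mat \<Rightarrow> complex mat \<Rightarrow> complex mat" where
  "append_cols A B = mat (dim_row A) (dim_col A + dim_col B)
     (\<lambda>(i,j). if j < dim_col A then A$$(i,j) else B$$(i, j - dim_col A))"

lemma append_cols_carrier:
  "A \<in> carrier_mat N a \<Longrightarrow> B \<in> carrier_mat N b \<Longrightarrow> append_cols A B \<in> carrier_mat N (a + b)"
  unfolding append_cols_def by auto

lemma append_cols_mult_append_vec: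
  assumes A: "A \<in> carrier_mat N a" and B: "B \<in> carrier_mat N b"
    and c: "c \<in> carrier_vec a" and d: "d \<in> carrier_vec b"
  shows "append_cols A B *\<^sub>v (c @\<^sub>v d) = A *\<^sub>v c + B *\<^sub>v d"
proof (intro eq_vecI)
  fix i assume "i < dim_vec (A *\<^sub>v c + B *\<^sub>v d)"
  then have i: "i < N" using A B by auto
  have "row (append_cols A B) i = row A i @\<^sub>v row B i"
    using A B i by (intro eq_vecI) (auto simp: append_cols_def)
  then show "(append_cols A B *\<^sub>v (c @\<^sub>v d))$i = (A *\<^sub>v c + B *\<^sub>v d)$i"
    using A B c d i append_cols_carrier[OF A B] by (simp add: scalar_prod_append[of _ a _ b])
qed (use A B in \<open>auto simp: append_cols_def\<close>)

text \<open>A J-definite subspace and a J-neutral subspace J-orthogonal to it span a J-semidefinite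
  subspace of dimension a + b, whence a + b \<le> n.\<close>
lemma J_definite_neutral_dim_le:
  assumes Z: "Z \<in> carrier_mat (2*n) a" and V: "V \<in> carrier_mat (2*n) b"
    and V_inj: "\<forall>d \<in> carrier_vec b. V *\<^sub>v d = 0\<^sub>v (2*n) \<longrightarrow> d = 0\<^sub>v b"
    and sg: "sg = 1 \<or> sg = (-1::real)"
    and definite: "\<forall>c \<in> carrier_vec a. c \<noteq> 0\<^sub>v a \<longrightarrow> 0 < sg * Re (J_form n (Z *\<^sub>v c) (Z *\<^sub>v c))"
    and neutral: "\<forall>d \<in> carrier_vec b. \<forall>d' \<in> carrier_vec b. J_form n (V *\<^sub>v d) (V *\<^sub>v d') = 0"
    and orth: "\<forall>c \<in> carrier_vec a. \<forall>d \<in> carrier_vec b.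
       J_form n (Z *\<^sub>v c) (V *\<^sub>v d) = 0 \<and> J_form n (V *\<^sub>v d) (Z *\<^sub>v c) = 0"
  shows "a + b \<le> n"
proof -
  let ?X = "append_cols Z V"
  have XC: "?X \<in> carrier_mat (2*n) (a + b)" using append_cols_carrier[OF Z V] .
  have form: "J_form n (?X *\<^sub>v (c @\<^sub>v d)) (?X *\<^sub>v (c @\<^sub>v d)) = J_form n (Z *\<^sub>v c) (Z *\<^sub>v c)"
    if c: "c \<in> carrier_vec a" and d: "d \<in> carrier_vec b" for c d
    using append_cols_mult_append_vec[OF Z V c d] Z V c d orth neutral
    by (simp add: J_form_add_left J_form_add_right)
  have semidef: "0 \<le> sg * Re (J_form n (Z *\<^sub>v c) (Z *\<^sub>v c))" if c: "c \<in> carrier_vec a" for c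
    using definite c Z by (cases "c = 0\<^sub>v a") (auto simp: mult_mat_vec_zero J_form_zero_left less_imp_le)
  have inj: "c @\<^sub>v d = 0\<^sub>v (a + b)"
    if c: "c \<in> carrier_vec a" and d: "d \<in> carrier_vec b" and X0: "?X *\<^sub>v (c @\<^sub>v d) = 0\<^sub>v (2*n)" for c d
  proof -
    have sum0: "Z *\<^sub>v c + V *\<^sub>v d = 0\<^sub>v (2*n)" using X0 append_cols_mult_append_vec[OF Z V c d] by simp
    have Zc: "Z *\<^sub>v c = - (V *\<^sub>v d)"
    proof (intro eq_vecI)
      fix i assume "i < dim_vec (- (V *\<^sub>v d))"
      then have i: "i < 2*n" using V by auto
      then have "(Z *\<^sub>v c)$i + (V *\<^sub>v d)$i = 0" using arg_cong[OF sum0, of "\<lambda>v. v $ i"] Z V by simp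
      then show "(Z *\<^sub>v c)$i = (- (V *\<^sub>v d))$i" using i V by (simp add: add_eq_0_iff2)
    qed (use Z V in auto)
    have "- (V *\<^sub>v d) = (-1) \<cdot>\<^sub>v (V *\<^sub>v d)" by auto
    then have "J_form n (Z *\<^sub>v c) (Z *\<^sub>v c) = J_form n (V *\<^sub>v d) (V *\<^sub>v d)"
      unfolding Zc using V d by (simp add: J_form_smult_left J_form_smult_right)
    then have c0: "c = 0\<^sub>v a" using definite neutral c d by fastforce
    then have "- (V *\<^sub>v d) = 0\<^sub>v (2*n)" using Zc Z by (simp add: mult_mat_vec_zero)
    then have "V *\<^sub>v d = 0\<^sub>v (2*n)" by (metis uminus_uminus_vec uminus_zero_vec)
    then have "d = 0\<^sub>v b" using V_inj d by auto
    then show ?thesis using c0 by (intro eq_vecI) auto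
  qed
  show ?thesis
    using J_semidefinite_dim_le[OF XC _ sg] inj form semidef by (auto simp: all_vec_append)
qed

section \<open>Counting eigenvalues\<close>

definition indices :: "('a \<Rightarrow> bool) \<Rightarrow> 'a list \<Rightarrow> nat list" where
  "indices P xs = filter (\<lambda>j. P (xs!j)) [0..<length xs]"

lemma length_indices: "length (indices P xs) = length (filter P xs)"
  unfolding indices_def length_filter_conv_card by (intro arg_cong[where f=card]) auto

lemma distinct_indices: "distinct (indices P xs)"
  by (simp add: indices_def)

lemma set_indices: "set (indices P xs) \<subseteq> {..<length xs}"
  by (auto simp: indices_def)

lemma nth_indices:
  assumes "j < length (indices P xs)"
  shows "indices P xs ! j < length xs \<and> P (xs ! (indices P xs ! j))"
  using nth_mem[OF assms] by (auto simp: indices_def)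

definition selection_mat :: "nat \<Rightarrow> nat list \<Rightarrow> complex mat" where
  "selection_mat nc js = mat nc (length js) (\<lambda>(l,j). if l = js!j then 1 else 0)"

lemma selection_mat_carrier: "selection_mat nc js \<in> carrier_mat nc (length js)"
  unfolding selection_mat_def by auto

context
  fixes A :: "complex mat" and N nc :: nat and js :: "nat list"
  assumes A: "A \<in> carrier_mat N nc" and js: "set js \<subseteq> {..<nc}"
begin

lemma col_mult_selection_mat:
  assumes j: "j < length js"
  shows "col (A * selection_mat nc js) j = col A (js!j)"
proof -
  have "col (selection_mat nc js) j = unit_vec nc (js!j)"
    unfolding selection_mat_def using j js by (intro eq_vecI) (auto simp: unit_vec_def)
  moreover have "js!j < nc" using js j nth_mem by blast
  ultimately show ?thesis
    using col_mult2[OF A selection_mat_carrier j] mult_mat_vec_unit_vec[OF A] by simp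
qed

lemma mult_selection_mat_injective:
  assumes inj: "\<forall>x \<in> carrier_vec nc. A *\<^sub>v x = 0\<^sub>v N \<longrightarrow> x = 0\<^sub>v nc" and d: "distinct js"
  shows "\<forall>x \<in> carrier_vec (length js). (A * selection_mat nc js) *\<^sub>v x = 0\<^sub>v N \<longrightarrow> x = 0\<^sub>v (length js)"
proof (intro ballI impI)
  let ?S = "selection_mat nc js"
  fix x assume x: "x \<in> carrier_vec (length js)" and z: "(A * ?S) *\<^sub>v x = 0\<^sub>v N"
  have "A *\<^sub>v (?S *\<^sub>v x) = 0\<^sub>v N" using z A x selection_mat_carrier[of nc js] by simp
  moreover have "?S *\<^sub>v x \<in> carrier_vec nc" using selection_mat_carrier[of nc js] x by auto
  ultimately have Sx: "?S *\<^sub>v x = 0\<^sub>v nc" using inj by auto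
  show "x = 0\<^sub>v (length js)"
  proof (intro eq_vecI)
    fix j assume "j < dim_vec (0\<^sub>v (length js))"
    then have j: "j < length js" by auto
    have jj: "js!j < nc" using js j nth_mem by blast
    have "(?S *\<^sub>v x)$(js!j) = (\<Sum>j'<length js. (if js!j = js!j' then 1 else 0) * x$j')"
      using mult_mat_vec_index_sum[OF selection_mat_carrier x jj] jj
      unfolding selection_mat_def by (auto intro!: sum.cong)
    also have "\<dots> = (\<Sum>j'<length js. if j' = j then x$j' else 0)"
      using d j by (intro sum.cong) (auto simp: nth_eq_iff_index_eq)
    finally show "x$j = 0\<^sub>v (length js) $ j" using Sx jj j by simp
  qed (use x in auto)
qed

end

lemma length_filter_partition3:
  assumes "\<forall>x\<in>set xs. (P x \<and> \<not> Q x \<and> \<not> R x) \<or> (\<not> P x \<and> Q x \<and> \<not> R x) \<or> (\<not> P x \<and> \<not> Q x \<and> R x)"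
  shows "length (filter P xs) + length (filter Q xs) + length (filter R xs) = length xs"
  using assms by (induct xs) auto

lemma order_linear_factors:
  "order (a::complex) (\<Prod>e\<leftarrow>es. [:-e, 1:]) = length (filter (\<lambda>e. e = a) es)"
proof (induct es)
  case (Cons e es)
  have "(\<Prod>e\<leftarrow>es. [:-e, 1::complex:]) \<noteq> 0" by (auto simp: prod_list_zero_iff)
  moreover have "[:-e, 1::complex:] \<noteq> 0" by simp
  ultimately have "[:-e, 1:] * (\<Prod>e\<leftarrow>es. [:-e, 1::complex:]) \<noteq> 0" by (metis mult_eq_0_iff)
  then have "order a ([:-e, 1:] * (\<Prod>e\<leftarrow>es. [:-e, 1:])) = order a [:-e, 1:] + order a (\<Prod>e\<leftarrow>es. [:-e, 1:])"
    by (rule order_mult)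
  then show ?case using Cons by (simp add: order_linear' del: mult_pCons_left)
qed (simp add: order_0I)

lemma sum_order_linear_factors:
  fixes es :: "complex list"
  shows "(\<Sum>a\<in>{a. poly (\<Prod>e\<leftarrow>es. [:-e, 1:]) a = 0 \<and> P a}. order a (\<Prod>e\<leftarrow>es. [:-e, 1:])) = length (filter P es)"
proof -
  have count: "(\<Sum>a\<in>S. length (filter (\<lambda>e. e = a) es)) = length (filter P es)"
    if "finite S" "{a. a \<in> set es \<and> P a} \<subseteq> S" "S \<subseteq> {a. P a}" for S :: "complex set"
    using that
  proof (induct es)
    case (Cons e es)
    have "(\<Sum>a\<in>S. length (filter (\<lambda>x. x = a) (e # es))) =
          (\<Sum>a\<in>S. length (filter (\<lambda>x. x = a) es) + (if a = e then 1 else 0))"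
      by (intro sum.cong) auto
    also have "\<dots> = (\<Sum>a\<in>S. length (filter (\<lambda>x. x = a) es)) + (if e \<in> S then 1 else 0)"
      using Cons.prems by (simp add: sum.distrib)
    finally show ?case using Cons by auto
  qed simp
  have "{a. poly (\<Prod>e\<leftarrow>es. [:-e, 1:]) a = 0 \<and> P a} = {a. a \<in> set es \<and> P a}"
    by (auto simp: poly_prod_list prod_list_zero_iff o_def)
  then show ?thesis using count[of "{a. a \<in> set es \<and> P a}"] by (auto simp: order_linear_factors)
qed

lemma nu_pos_linear_factors:
  "char_poly A = (\<Prod>e\<leftarrow>es. [:-e, 1:]) \<Longrightarrow> nu_pos A = length (filter (\<lambda>e. e \<in> \<real> \<and> Re e > 0) es)"
  unfolding nu_pos_def by (simp add: sum_order_linear_factors)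

lemma nu_neg_linear_factors:
  "char_poly A = (\<Prod>e\<leftarrow>es. [:-e, 1:]) \<Longrightarrow> nu_neg A = length (filter (\<lambda>e. e \<in> \<real> \<and> Re e < 0) es)"
  unfolding nu_neg_def by (simp add: sum_order_linear_factors)

section \<open>Spectra of matrices\<close>

lemma op_spectrum_eigenvalue:
  assumes T: "T \<in> carrier_mat N N" and z: "z \<in> op_spectrum T"
  shows "eigenvalue T z"
proof -
  have C: "T - z \<cdot>\<^sub>m 1\<^sub>m N \<in> carrier_mat N N" using T by auto
  have "det (T - z \<cdot>\<^sub>m 1\<^sub>m N) = 0"
  proof (rule ccontr)
    assume "det (T - z \<cdot>\<^sub>m 1\<^sub>m N) \<noteq> 0"
    from det_non_zero_imp_unit[OF C this, of "()"] obtain B where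
      "B \<in> carrier_mat N N" "B * (T - z \<cdot>\<^sub>m 1\<^sub>m N) = 1\<^sub>m N" "(T - z \<cdot>\<^sub>m 1\<^sub>m N) * B = 1\<^sub>m N"
      unfolding Units_def by (auto simp: ring_mat_def)
    then have "invertible_mat (T - z \<cdot>\<^sub>m 1\<^sub>m N)"
      unfolding invertible_mat_def inverts_mat_def using C by auto
    then show False using z T unfolding op_spectrum_def by auto
  qed
  then obtain v where v: "v \<in> carrier_vec N" "v \<noteq> 0\<^sub>v N" "(T - z \<cdot>\<^sub>m 1\<^sub>m N) *\<^sub>v v = 0\<^sub>v N"
    using det_0_iff_vec_prod_zero[OF C] by auto
  have "T *\<^sub>v v = z \<cdot>\<^sub>v v" using v T by (intro eq_vecI) (auto simp: minus_mult_distrib_mat_vec vec_eq_iff)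
  then show ?thesis unfolding eigenvalue_def eigenvector_def using v T by auto
qed

lemma finite_set_isolated:
  assumes "finite (S :: complex set)"
  shows "\<exists>e>0. \<forall>w\<in>S. cmod (w - z) < e \<longrightarrow> w = z"
proof (cases "S - {z} = {}")
  case True then show ?thesis by (intro exI[of _ 1]) auto
next
  case False
  define e where "e = Min ((\<lambda>w. cmod (w - z)) ` (S - {z}))"
  have fin: "finite ((\<lambda>w. cmod (w - z)) ` (S - {z}))" using assms by auto
  have "e \<in> (\<lambda>w. cmod (w - z)) ` (S - {z})" unfolding e_def using Min_in[OF fin] False by auto
  then have "e > 0" by auto
  moreover have "w = z" if w: "w \<in> S" "cmod (w - z) < e" for w
  proof (rule ccontr)
    assume "w \<noteq> z"
    then have "e \<le> cmod (w - z)" unfolding e_def using fin w by (auto intro: Min_le)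
    then show False using w by auto
  qed
  ultimately show ?thesis by blast
qed

lemma gen_eigenspace_finite_span:
  assumes T: "T \<in> carrier_mat N N"
  shows "\<exists>B. finite B \<and> B \<subseteq> gen_eigenspace T z \<and>
    gen_eigenspace T z \<subseteq> module.span class_ring (module_vec TYPE(complex) (dim_row T)) B"
proof -
  interpret vs: vec_space "TYPE(complex)" N .
  let ?G = "gen_eigenspace T z"
  have Gc: "?G \<subseteq> carrier_vec N" using gen_eigenspace_carrier[OF T] by auto
  let ?P = "\<lambda>S. S \<subseteq> ?G \<and> vs.lin_indpt S"
  have bnd: "\<And>A. ?P A \<Longrightarrow> finite A \<and> card A \<le> N"
    using vs.li_le_dim[OF vs.fin_dim] Gc vs.dim_is_n by (metis order_trans)
  have "?P {}" unfolding vs.lin_dep_def by auto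
  then obtain M where M: "finite M" "maximal M ?P" using maximal_exists[of ?P N "{}", OF bnd] by blast
  have MP: "M \<subseteq> ?G" "vs.lin_indpt M" using M(2) unfolding maximal_def by auto
  have Mc: "M \<subseteq> carrier_vec N" using MP Gc by auto
  have "g \<in> vs.span M" if g: "g \<in> ?G" for g
  proof (rule ccontr)
    assume ns: "g \<notin> vs.span M"
    then have gM: "g \<notin> M" using vs.in_own_span[OF Mc] by auto
    have "vs.lin_indpt (M \<union> {g})" using vs.lin_dep_iff_in_span[OF Mc MP(2) _ gM] g Gc ns by auto
    then have "M \<union> {g} = M" using M(2) MP g unfolding maximal_def by blast
    then show False using gM by auto
  qed
  then show ?thesis using M(1) MP T by auto
qed

lemma ess_S1_gapped_mat:
  assumes T: "T \<in> carrier_mat N N"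
  shows "ess_S1_gapped T"
  unfolding ess_S1_gapped_def
proof (intro ballI impI)
  fix z assume z: "z \<in> op_spectrum T"
  have "op_spectrum T \<subseteq> spectrum T" using op_spectrum_eigenvalue[OF T] unfolding spectrum_def by auto
  then have "finite (op_spectrum T)" using card_finite_spectrum(1)[OF T] finite_subset by blast
  then obtain e where "e > 0" "\<forall>w\<in>op_spectrum T. cmod (w - z) < e \<longrightarrow> w = z"
    using finite_set_isolated by blast
  then show "discrete_spectrum_point T z" unfolding discrete_spectrum_point_def
    using z op_spectrum_eigenvalue[OF T z] gen_eigenspace_finite_span[OF T, of z] by blast
qed

section \<open>Vanishing of the signature\<close>

locale signature_setting =
  fixes n :: nat and T :: "complex mat" and h :: real and Phi :: "complex mat" and k :: nat
  assumes J_unitary: "J_unitary n T" and admissible: "admissible_width T h"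
    and isometry: "isometry_onto Phi (2*n) k (E_eq T h)"
begin

sublocale vs: vec_space "TYPE(complex)" "2*n" .

definition in_annulus :: "complex \<Rightarrow> bool" where
  "in_annulus z \<longleftrightarrow> exp (-h) \<le> cmod z \<and> cmod z \<le> exp h"

definition annulus_vectors :: "complex vec set" where
  "annulus_vectors = \<Union> {gen_eigenspace T z | z. eigenvalue T z \<and> in_annulus z}"

definition compression :: "complex mat" where
  "compression = mat_adjoint Phi * J_mat n * Phi"

lemma T_carrier: "T \<in> carrier_mat (2*n) (2*n)"
  using J_unitary by (simp add: J_unitary_def)

lemma Phi_carrier: "Phi \<in> carrier_mat (2*n) k"
  using isometry by (simp add: isometry_onto_def)

lemma annulus_vectors_carrier: "annulus_vectors \<subseteq> carrier_vec (2*n)"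
  using gen_eigenspace_carrier[OF T_carrier] by (auto simp: annulus_vectors_def)

lemma range_Phi: "{Phi *\<^sub>v x | x. x \<in> carrier_vec k} = vs.span annulus_vectors"
  using isometry T_carrier unfolding isometry_onto_def E_eq_def annulus_vectors_def in_annulus_def
  by simp

lemma Phi_mult_in_span: "x \<in> carrier_vec k \<Longrightarrow> Phi *\<^sub>v x \<in> vs.span annulus_vectors"
  using range_Phi by blast

lemma span_in_range_Phi: "e \<in> vs.span annulus_vectors \<Longrightarrow> \<exists>x \<in> carrier_vec k. e = Phi *\<^sub>v x"
  using range_Phi by blast

lemma gen_eigenvector_in_span:
  assumes v: "v \<in> gen_eigenspace T z" "v \<noteq> 0\<^sub>v (2*n)" and z: "in_annulus z"
  shows "v \<in> vs.span annulus_vectors"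
  using eigenvalue_if_gen_eigenspace[OF T_carrier v] v z vs.in_own_span[OF annulus_vectors_carrier]
  unfolding annulus_vectors_def by blast

lemma in_annulus_mult_ne_one:
  assumes "in_annulus z" "\<not> in_annulus w"
  shows "cmod z * cmod w \<noteq> 1"
proof -
  have "0 < exp (-h)" by simp
  consider "exp h < cmod w" | "cmod w < exp (-h)" using assms(2) unfolding in_annulus_def by linarith
  then show ?thesis
  proof cases
    case 1
    have "1 = exp (-h) * exp h" by (simp add: exp_minus)
    also have "\<dots> < cmod z * cmod w" using assms(1) 1 unfolding in_annulus_def
      by (intro mult_le_less_imp_less) auto
    finally show ?thesis by simp
  next
    case 2
    have "cmod z * cmod w < exp h * exp (-h)" using assms(1) 2 unfolding in_annulus_def
      by (intro mult_le_less_imp_less) auto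
    also have "\<dots> = 1" by (simp add: exp_minus)
    finally show ?thesis by simp
  qed
qed

lemma span_J_orthogonal_outside:
  assumes e: "e \<in> vs.span annulus_vectors" and v: "v \<in> gen_eigenspace T w" and w: "\<not> in_annulus w"
  shows "J_form n e v = 0" "J_form n v e = 0"
proof -
  have vc: "v \<in> carrier_vec (2*n)" using gen_eigenspace_carrier[OF T_carrier v] .
  have "\<forall>g\<in>annulus_vectors. J_form n g v = 0"
    using J_unitary_gen_eigenspaces_orthogonal[OF J_unitary mult_cnj_ne_one _ v] in_annulus_mult_ne_one w
    unfolding annulus_vectors_def by blast
  then show e0: "J_form n e v = 0" using J_form_span_orthogonal[OF annulus_vectors_carrier vc] e by blast
  have "e \<in> carrier_vec (2*n)" using vs.span_closed[OF annulus_vectors_carrier] e by auto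
  then show "J_form n v e = 0" using J_form_conjugate[OF _ vc, of e] e0 by simp
qed

lemma J_form_Phi:
  "x \<in> carrier_vec k \<Longrightarrow> y \<in> carrier_vec k \<Longrightarrow> J_form n (Phi *\<^sub>v x) (Phi *\<^sub>v y) = (compression *\<^sub>v x) \<bullet>c y"
  unfolding compression_def using J_form_compression[OF Phi_carrier] .

lemma compression_self_adjoint: "self_adjoint k compression"
proof -
  have "compression \<in> carrier_mat k k"
    unfolding compression_def using Phi_carrier mat_adjoint_carrier[OF Phi_carrier] J_mat_carrier[of n] by auto
  moreover have "(compression *\<^sub>v x) \<bullet>c y = x \<bullet>c (compression *\<^sub>v y)"
    if x: "x \<in> carrier_vec k" and y: "y \<in> carrier_vec k" for x y
  proof -
    have c: "Phi *\<^sub>v x \<in> carrier_vec (2*n)" "Phi *\<^sub>v y \<in> carrier_vec (2*n)" using Phi_carrier x y by auto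
    have "(compression *\<^sub>v x) \<bullet>c y = cnj (J_form n (Phi *\<^sub>v y) (Phi *\<^sub>v x))"
      using J_form_Phi[OF x y] J_form_conjugate[OF c(2,1)] by simp
    also have "\<dots> = x \<bullet>c (compression *\<^sub>v y)"
      using J_form_Phi[OF y x] cscalar_prod_conjugate[of "compression *\<^sub>v y" k x] x y calculation
        \<open>compression \<in> carrier_mat k k\<close> by auto
    finally show ?thesis .
  qed
  ultimately show ?thesis unfolding self_adjoint_def by blast
qed

end

locale signature_bases = signature_setting +
  fixes V :: "complex mat" and es :: "complex list" and Y :: "complex mat" and fs :: "complex list"
  assumes V_carrier: "V \<in> carrier_mat (2*n) (2*n)"
    and V_injective: "\<forall>x \<in> carrier_vec (2*n). V *\<^sub>v x = 0\<^sub>v (2*n) \<longrightarrow> x = 0\<^sub>v (2*n)"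
    and V_gen_eigenvectors: "\<forall>j<2*n. col V j \<in> gen_eigenspace T (es!j)"
    and length_es: "length es = 2*n"
    and Y_carrier: "Y \<in> carrier_mat k k"
    and Y_injective: "\<forall>x \<in> carrier_vec k. Y *\<^sub>v x = 0\<^sub>v k \<longrightarrow> x = 0\<^sub>v k"
    and Y_eigenvectors: "\<forall>j<k. compression *\<^sub>v col Y j = fs!j \<cdot>\<^sub>v col Y j \<and> cnj (fs!j) = fs!j"
    and length_fs: "length fs = k"
    and char_poly_compression: "char_poly compression = (\<Prod>f\<leftarrow>fs. [:-f, 1:])"
begin

lemma col_V_nonzero: "j < 2*n \<Longrightarrow> col V j \<noteq> 0\<^sub>v (2*n)"
  using V_injective mult_mat_vec_unit_vec[OF V_carrier] unit_vec_carrier[of "2*n" j]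
  by (metis index_unit_vec(1) index_zero_vec(1) zero_neq_one)

lemma col_Y_nonzero: "j < k \<Longrightarrow> col Y j \<noteq> 0\<^sub>v k"
  using Y_injective mult_mat_vec_unit_vec[OF Y_carrier] unit_vec_carrier[of k j]
  by (metis index_unit_vec(1) index_zero_vec(1) zero_neq_one)

text \<open>The J-form is nondegenerate on the range of Phi, since that range is J-orthogonal to the
  generalized eigenvectors outside the annulus and contains those inside it.\<close>
lemma compression_injective:
  assumes y: "y \<in> carrier_vec k" and My: "compression *\<^sub>v y = 0\<^sub>v k"
  shows "y = 0\<^sub>v k"
proof -
  let ?w = "Phi *\<^sub>v y"
  have wE: "?w \<in> vs.span annulus_vectors" using Phi_mult_in_span[OF y] .
  have wc: "?w \<in> carrier_vec (2*n)" using Phi_carrier y by auto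
  have orth_cols: "J_form n ?w (col V l) = 0" if l: "l < 2*n" for l
  proof (cases "in_annulus (es!l)")
    case True
    then have "col V l \<in> vs.span annulus_vectors"
      using gen_eigenvector_in_span V_gen_eigenvectors col_V_nonzero l by blast
    then obtain c where "c \<in> carrier_vec k" "col V l = Phi *\<^sub>v c" using span_in_range_Phi by blast
    then show ?thesis using J_form_Phi[OF y] My by simp
  next
    case False
    then show ?thesis using span_J_orthogonal_outside(1)[OF wE] V_gen_eigenvectors l by blast
  qed
  have "J_form n ?w v = 0" if v: "v \<in> carrier_vec (2*n)" for v
  proof -
    obtain d where d: "d \<in> carrier_vec (2*n)" "v = V *\<^sub>v d"
      using injective_mat_surjective[OF V_carrier V_injective v] by auto
    show ?thesis using J_form_mult_mat_vec_right[OF V_carrier d(1) wc] orth_cols d(2) by simp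
  qed
  then have "?w = 0\<^sub>v (2*n)" using J_form_nondegenerate[OF wc] by blast
  then have "(mat_adjoint Phi * Phi) *\<^sub>v y = 0\<^sub>v k"
    using mat_adjoint_carrier[OF Phi_carrier] Phi_carrier y by (simp add: mult_mat_vec_zero)
  then show ?thesis using isometry y unfolding isometry_onto_def by simp
qed

lemma eigenvalues_nonzero: "j < k \<Longrightarrow> Re (fs!j) \<noteq> 0"
proof
  assume j: "j < k" and "Re (fs!j) = 0"
  moreover have "Im (fs!j) = 0" using Y_eigenvectors j Reals_cnj_iff complex_is_Real_iff by blast
  ultimately have "fs!j = 0" by (simp add: complex_eq_iff)
  then have "compression *\<^sub>v col Y j = 0\<^sub>v k" using Y_eigenvectors Y_carrier j by auto
  then show False using compression_injective[of "col Y j"] col_Y_nonzero[OF j] Y_carrier j by simp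
qed

lemma annulus_count_le: "length (filter in_annulus es) \<le> k"
proof -
  let ?I = "indices in_annulus es"
  let ?W = "V * selection_mat (2*n) ?I"
  have I: "set ?I \<subseteq> {..<2*n}" using set_indices length_es by metis
  have WC: "?W \<in> carrier_mat (2*n) (length ?I)" using V_carrier selection_mat_carrier by auto
  have PA: "mat_adjoint Phi \<in> carrier_mat k (2*n)" using mat_adjoint_carrier[OF Phi_carrier] .
  have "col ?W j = Phi *\<^sub>v (mat_adjoint Phi *\<^sub>v col ?W j)" if j: "j < length ?I" for j
  proof -
    have "?I!j < 2*n" "in_annulus (es!(?I!j))" using nth_indices[OF j] length_es by auto
    then have "col ?W j \<in> vs.span annulus_vectors"
      using col_mult_selection_mat[OF V_carrier I j] gen_eigenvector_in_span V_gen_eigenvectors col_V_nonzero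
      by auto
    then obtain c where c: "c \<in> carrier_vec k" "col ?W j = Phi *\<^sub>v c" using span_in_range_Phi by blast
    have "mat_adjoint Phi *\<^sub>v (Phi *\<^sub>v c) = (mat_adjoint Phi * Phi) *\<^sub>v c"
      using Phi_carrier PA c by simp
    then have "mat_adjoint Phi *\<^sub>v (Phi *\<^sub>v c) = c"
      using isometry c unfolding isometry_onto_def by simp
    then show ?thesis using c by simp
  qed
  then have W_eq: "?W = Phi * (mat_adjoint Phi * ?W)"
  proof (intro mat_col_eqI)
    fix j assume "j < dim_col (Phi * (mat_adjoint Phi * ?W))"
    then have j: "j < length ?I" using WC selection_mat_carrier[of "2*n" ?I] by simp
    then show "col ?W j = col (Phi * (mat_adjoint Phi * ?W)) j"
      using col_mult2[OF Phi_carrier _ j, of "mat_adjoint Phi * ?W"] col_mult2[OF PA WC j] PA WC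
        \<open>\<And>j. j < length ?I \<Longrightarrow> _\<close>[OF j] by auto
  qed (use Phi_carrier PA WC in auto)
  have PW: "mat_adjoint Phi * ?W \<in> carrier_mat k (length ?I)" using PA WC by auto
  have "x = 0\<^sub>v (length ?I)"
    if x: "x \<in> carrier_vec (length ?I)" and C0: "(mat_adjoint Phi * ?W) *\<^sub>v x = 0\<^sub>v k" for x
  proof -
    have "?W *\<^sub>v x = Phi *\<^sub>v ((mat_adjoint Phi * ?W) *\<^sub>v x)"
      using assoc_mult_mat_vec[OF Phi_carrier PW x] W_eq by simp
    then have "?W *\<^sub>v x = 0\<^sub>v (2*n)" using C0 Phi_carrier by (simp add: mult_mat_vec_zero)
    then show ?thesis
      using mult_selection_mat_injective[OF V_carrier I V_injective distinct_indices] x by blast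
  qed
  then have "length ?I \<le> k" using injective_mat_cols_le_rows[OF PW] by blast
  then show ?thesis by (simp add: length_indices)
qed


lemma eigenvalue_real: "f \<in> set fs \<Longrightarrow> f = complex_of_real (Re f)"
  using Y_eigenvectors length_fs by (metis Reals_cnj_iff in_set_conv_nth of_real_Re)

text \<open>The eigenvectors of the compression for eigenvalues of sign sg span, via Phi, a J-definite
  subspace; the generalized eigenvectors of T on one side of the annulus span a J-neutral one,
  J-orthogonal to it.\<close>
lemma definite_plus_side_le:
  assumes sg: "sg = 1 \<or> sg = (-1::real)"
    and S_outside: "\<And>z. S z \<Longrightarrow> \<not> in_annulus z"
    and S_mult: "\<And>z w. S z \<Longrightarrow> S w \<Longrightarrow> cmod z * cmod w \<noteq> 1"
  shows "length (filter (\<lambda>f. 0 < sg * Re f) fs) + length (filter S es) \<le> n"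
proof -
  let ?I = "indices (\<lambda>f. 0 < sg * Re f) fs" and ?L = "indices S es"
  let ?U = "Y * selection_mat k ?I" and ?W = "V * selection_mat (2*n) ?L"
  let ?Z = "Phi * ?U"
  have I: "set ?I \<subseteq> {..<k}" and L: "set ?L \<subseteq> {..<2*n}"
    using set_indices length_fs length_es by metis+
  have UC: "?U \<in> carrier_mat k (length ?I)" using Y_carrier selection_mat_carrier by auto
  have WC: "?W \<in> carrier_mat (2*n) (length ?L)" using V_carrier selection_mat_carrier by auto
  have ZC: "?Z \<in> carrier_mat (2*n) (length ?I)" using Phi_carrier UC by auto
  have Zc: "?Z *\<^sub>v c = Phi *\<^sub>v (?U *\<^sub>v c)" if "c \<in> carrier_vec (length ?I)" for c
    using Phi_carrier UC that by simp
  have definite: "0 < sg * Re (J_form n (?Z *\<^sub>v c) (?Z *\<^sub>v c))"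
    if c: "c \<in> carrier_vec (length ?I)" "c \<noteq> 0\<^sub>v (length ?I)" for c
  proof -
    have "compression *\<^sub>v col ?U j = complex_of_real (Re (fs!(?I!j))) \<cdot>\<^sub>v col ?U j \<and> 0 < sg * Re (fs!(?I!j))"
      if j: "j < length ?I" for j
    proof -
      have i: "?I!j < k" "0 < sg * Re (fs!(?I!j))" using nth_indices[OF j] length_fs by auto
      then have "fs!(?I!j) = complex_of_real (Re (fs!(?I!j)))" using eigenvalue_real length_fs by simp
      then show ?thesis using col_mult_selection_mat[OF Y_carrier I j] Y_eigenvectors i by metis
    qed
    then have "0 < sg * Re ((compression *\<^sub>v (?U *\<^sub>v c)) \<bullet>c (?U *\<^sub>v c))"
      by (intro self_adjoint_definite_on_eigenvectors[OF compression_self_adjoint UC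
          mult_selection_mat_injective[OF Y_carrier I Y_injective distinct_indices] _ sg _ c,
          where lam = "\<lambda>j. Re (fs!(?I!j))"]) auto
    then show ?thesis using Zc[OF c(1)] J_form_Phi UC c(1) by simp
  qed
  have col_W: "col ?W j \<in> gen_eigenspace T (es!(?L!j)) \<and> S (es!(?L!j))" if j: "j < length ?L" for j
  proof -
    have "?L!j < 2*n" "S (es!(?L!j))" using nth_indices[OF j] length_es by auto
    then show ?thesis using col_mult_selection_mat[OF V_carrier L j] V_gen_eigenvectors by simp
  qed
  have "J_form n (col ?W j) (col ?W l) = 0" if "j < length ?L" "l < length ?L" for j l
    using col_W[OF that(1)] col_W[OF that(2)]
      J_unitary_gen_eigenspaces_orthogonal[OF J_unitary mult_cnj_ne_one[OF S_mult]] by blast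
  then have neutral: "J_form n (?W *\<^sub>v d) (?W *\<^sub>v d') = 0"
    if "d \<in> carrier_vec (length ?L)" "d' \<in> carrier_vec (length ?L)" for d d'
    using J_form_neutral_of_cols[OF WC _ that] by blast
  have orth: "J_form n (?Z *\<^sub>v c) (?W *\<^sub>v d) = 0 \<and> J_form n (?W *\<^sub>v d) (?Z *\<^sub>v c) = 0"
    if c: "c \<in> carrier_vec (length ?I)" and d: "d \<in> carrier_vec (length ?L)" for c d
  proof -
    have "?Z *\<^sub>v c \<in> vs.span annulus_vectors" using Zc[OF c] Phi_mult_in_span UC c by simp
    then have "J_form n (?Z *\<^sub>v c) (col ?W j) = 0 \<and> J_form n (col ?W j) (?Z *\<^sub>v c) = 0"
      if "j < length ?L" for j
      using span_J_orthogonal_outside col_W[OF that] S_outside by blast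
    moreover have "?Z *\<^sub>v c \<in> carrier_vec (2*n)" using ZC c by simp
    ultimately show ?thesis
      using J_form_mult_mat_vec_left[OF WC d] J_form_mult_mat_vec_right[OF WC d] by simp
  qed
  have "length ?I + length ?L \<le> n"
    using J_definite_neutral_dim_le[OF ZC WC
        mult_selection_mat_injective[OF V_carrier L V_injective distinct_indices] sg]
      definite neutral orth by blast
  then show ?thesis by (simp add: length_indices)
qed

lemma nu_pos_compression: "nu_pos compression = length (filter (\<lambda>f. 0 < Re f) fs)"
  unfolding nu_pos_linear_factors[OF char_poly_compression]
  using eigenvalue_real by (metis (mono_tags, lifting) Reals_of_real filter_cong)

lemma nu_neg_compression: "nu_neg compression = length (filter (\<lambda>f. Re f < 0) fs)"
  unfolding nu_neg_linear_factors[OF char_poly_compression]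
  using eigenvalue_real by (metis (mono_tags, lifting) Reals_of_real filter_cong)

lemma pos_neg_eigenvalue_count: "length (filter (\<lambda>f. 0 < Re f) fs) + length (filter (\<lambda>f. Re f < 0) fs) = k"
proof -
  have "Re f \<noteq> 0" if "f \<in> set fs" for f
    using that eigenvalues_nonzero length_fs by (auto simp: in_set_conv_nth)
  then have "filter (\<lambda>f. Re f < 0) fs = filter (\<lambda>f. \<not> 0 < Re f) fs"
    by (intro filter_cong) force+
  then show ?thesis using sum_length_filter_compl[of "\<lambda>f. 0 < Re f" fs] length_fs by simp
qed

lemma Sig_with_zero: "Sig_with n Phi = 0"
proof -
  have h: "0 < h" using admissible by (simp add: admissible_width_def)
  define outer where "outer z \<longleftrightarrow> exp h < cmod z" for z
  define inner where "inner z \<longleftrightarrow> cmod z < exp (-h)" for z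
  have outer: "cmod z * cmod w \<noteq> 1" if "outer z" "outer w" for z w
  proof -
    have "1 < exp h" using h by simp
    then have "1 < cmod z" "1 < cmod w" using that unfolding outer_def by linarith+
    then show ?thesis using less_1_mult by fastforce
  qed
  have inner: "cmod z * cmod w \<noteq> 1" if "inner z" "inner w" for z w
  proof -
    have "exp (-h) < 1" using h by simp
    then have "cmod z < 1" "cmod w \<le> 1" using that unfolding inner_def by linarith+
    then have "cmod z * cmod w < 1" using mult_left_le[of "cmod w" "cmod z"] by simp
    then show ?thesis by simp
  qed
  have "outer z \<Longrightarrow> \<not> in_annulus z" "inner z \<Longrightarrow> \<not> in_annulus z" for z
    unfolding outer_def inner_def in_annulus_def by auto
  then have "length (filter (\<lambda>f. 0 < Re f) fs) + length (filter outer es) \<le> n"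
    "length (filter (\<lambda>f. 0 < Re f) fs) + length (filter inner es) \<le> n"
    "length (filter (\<lambda>f. Re f < 0) fs) + length (filter outer es) \<le> n"
    "length (filter (\<lambda>f. Re f < 0) fs) + length (filter inner es) \<le> n"
    using definite_plus_side_le[of 1] definite_plus_side_le[of "-1"] outer inner by auto
  moreover have "exp (-h) < exp h" using h by simp
  then have "\<forall>z\<in>set es. (outer z \<and> \<not> inner z \<and> \<not> in_annulus z) \<or>
      (\<not> outer z \<and> inner z \<and> \<not> in_annulus z) \<or> (\<not> outer z \<and> \<not> inner z \<and> in_annulus z)"
    unfolding outer_def inner_def in_annulus_def by (intro ballI) (smt (verit))
  then have "length (filter outer es) + length (filter inner es) + length (filter in_annulus es) = 2*n"
    using length_filter_partition3 length_es by metis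
  ultimately have "length (filter (\<lambda>f. 0 < Re f) fs) = length (filter (\<lambda>f. Re f < 0) fs)"
    using pos_neg_eigenvalue_count annulus_count_le by linarith
  then show ?thesis
    unfolding Sig_with_def compression_def[symmetric] nu_pos_compression nu_neg_compression by simp
qed

end

lemma J_unitary_Sig_with_zero:
  assumes "J_unitary n T" "admissible_width T h" "isometry_onto Phi (2*n) k (E_eq T h)"
  shows "Sig_with n Phi = 0"
proof -
  interpret signature_setting n T h Phi k using assms by unfold_locales
  note M = compression_self_adjoint
  obtain es where es: "char_poly T = (\<Prod>e\<leftarrow>es. [:-e, 1:])" "length es = 2*n"
    using char_poly_factorized[OF T_carrier] by blast
  obtain V where V: "V \<in> carrier_mat (2*n) (2*n)"
    "\<forall>x \<in> carrier_vec (2*n). V *\<^sub>v x = 0\<^sub>v (2*n) \<longrightarrow> x = 0\<^sub>v (2*n)"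
    "\<forall>j<2*n. col V j \<in> gen_eigenspace T (es!j)"
    using gen_eigenbasis[OF T_carrier es(1)] by blast
  obtain fs where fs: "char_poly compression = (\<Prod>f\<leftarrow>fs. [:-f, 1:])" "length fs = k"
    using char_poly_factorized[OF self_adjoint_carrier[OF M]] by blast
  obtain Y where Y: "Y \<in> carrier_mat k k" "\<forall>x \<in> carrier_vec k. Y *\<^sub>v x = 0\<^sub>v k \<longrightarrow> x = 0\<^sub>v k"
    "\<forall>j<k. compression *\<^sub>v col Y j = fs!j \<cdot>\<^sub>v col Y j \<and> cnj (fs!j) = fs!j"
    using self_adjoint_eigenbasis[OF M fs(1)] by blast
  interpret signature_bases n T h Phi k V es Y fs
    using V es(2) Y fs by unfold_locales auto
  show ?thesis by (rule Sig_with_zero)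
qed

theorem proposition5p6:
  fixes n :: nat and T :: "complex mat"
  assumes "J_unitary n T"
  shows "ess_S1_gapped T \<and>
    (\<forall>h Phi k. admissible_width T h \<longrightarrow> isometry_onto Phi (2*n) k (E_eq T h) \<longrightarrow>
        Sig_with n Phi = 0)"
  using ess_S1_gapped_mat[of T "2*n"] J_unitary_Sig_with_zero[OF assms] assms
  by (auto simp: J_unitary_def)

end
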